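(* For every filter $\xi$ on $X$, $\mathscr{G}_\xi(X)$ is a closed two-sided ideal of $\mathscr{E}(X)$ and $\mathscr{J}_{\mathrm{co}(\xi)}(X)\subset\mathscr{G}_\xi(X)$. If $\xi$ is coarse, then $\mathscr{J}_\xi(X)$ is also a closed two-sided ideal of $\mathscr{E}(X)$ and $\mathscr{J}_\xi(X)\subset\mathscr{G}_\xi(X)$.
   Context: $(X,d)$ is a non-compact proper metric space, $B_x(r)=\{y:d(x,y)\le r\}$, and $\mu$ is a Radon measure with support $X$ such that $\mu(B_x(r))>0$ and $\sup_x\mu(B_x(r))<\infty$ for all $r>0$. On $L^2(X,\mu)$, $\mathbf{1}_A$ is multiplication by the characteristic function of measurable $A$. A kernel $k$ on $X\times X$ is controlled if $k(x,y)=0$ whenever $d(x,y)>r$ for some $r$; $\mathscr{E}(X)$ is the norm closure of the operators $(Op(k)f)(x)=\int k(x,y)f(y)d\mu(y)$, $k$ bounded, uniformly continuous and controlled. A filter is a nonempty family of subsets, not containing $\emptyset$, stable under finite intersections and supersets; $\lim_{x\to\xi}f(x)=0$ means $\{x:|f(x)|<\varepsilon\}\in\xi$ for all $\varepsilon>0$. $F^{(r)}=\{x:\inf_{y\notin F}d(x,y)>r\}$; a filter $\eta$ is coarse if $F\in\eta\Rightarrow F^{(r)}\in\eta$ for all $r>0$; $\mathrm{co}(\xi)=\{F:F^{(r)}\in\xi\ \forall r>0\}$, the largest coarse filter contained in $\xi$. For a filter $\eta$, $\mathscr{J}_\eta(X)=\{T\in\mathscr{E}(X):\inf_F\|\mathbf{1}_FT\|=0\}$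 (infimum over measurable $F\in\eta$) and $\mathscr{G}_\eta(X)=\{T\in\mathscr{E}(X):\lim_{x\to\eta}\|\mathbf{1}_{B_x(r)}T\|=0\ \forall r>0\}$. *)

theory Defs
  imports "HOL-Analysis.Analysis"
begin

text \<open>Elements of L^2 are represented by square-integrable Borel functions
  X -> complex (equality in L^2 is equality almost everywhere).\<close>

definition L2 :: "'a measure \<Rightarrow> ('a \<Rightarrow> complex) set" where
  "L2 M = {f. f \<in> borel_measurable M \<and> integrable M (\<lambda>x. (cmod (f x))\<^sup>2)}"

definition l2norm :: "'a measure \<Rightarrow> ('a \<Rightarrow> complex) \<Rightarrow> real" where
  "l2norm M f = sqrt (\<integral>x. (cmod (f x))\<^sup>2 \<partial>M)"

type_synonym 'a op = "('a \<Rightarrow> complex) \<Rightarrow> ('a \<Rightarrow> complex)"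

definition bounded_op :: "'a measure \<Rightarrow> 'a op \<Rightarrow> bool" where
  "bounded_op M T \<longleftrightarrow>
     (\<forall>f\<in>L2 M. T f \<in> L2 M) \<and>
     (\<forall>f\<in>L2 M. \<forall>g\<in>L2 M. (AE x in M. f x = g x) \<longrightarrow> (AE x in M. T f x = T g x)) \<and>
     (\<forall>f\<in>L2 M. \<forall>g\<in>L2 M. AE x in M. T (\<lambda>y. f y + g y) x = T f x + T g x) \<and>
     (\<forall>f\<in>L2 M. \<forall>c. AE x in M. T (\<lambda>y. c * f y) x = c * T f x) \<and>
     (\<exists>C. \<forall>f\<in>L2 M. l2norm M (T f) \<le> C * l2norm M f)"

definition opnorm :: "'a measure \<Rightarrow> 'a op \<Rightarrow> real" where
  "opnorm M T = Sup {l2norm M (T f) | f. f \<in> L2 M \<and> l2norm M f \<le> 1}"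

definition mult_ind :: "'a set \<Rightarrow> 'a op" where
  "mult_ind A = (\<lambda>f x. indicator A x * f x)"

definition op_add :: "'a op \<Rightarrow> 'a op \<Rightarrow> 'a op" where
  "op_add S T = (\<lambda>f x. S f x + T f x)"
definition op_diff :: "'a op \<Rightarrow> 'a op \<Rightarrow> 'a op" where
  "op_diff S T = (\<lambda>f x. S f x - T f x)"
definition op_scale :: "complex \<Rightarrow> 'a op \<Rightarrow> 'a op" where
  "op_scale c T = (\<lambda>f x. c * T f x)"
definition op_zero :: "'a op" where
  "op_zero = (\<lambda>f x. 0)"

definition op_kernel :: "'a measure \<Rightarrow> ('a \<times> 'a \<Rightarrow> complex) \<Rightarrow> 'a op" where
  "op_kernel M k = (\<lambda>f x. \<integral>y. k (x, y) * f y \<partial>M)"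

definition controlled :: "('a::metric_space \<times> 'a \<Rightarrow> complex) \<Rightarrow> bool" where
  "controlled k \<longleftrightarrow> (\<exists>r. \<forall>x y. dist x y > r \<longrightarrow> k (x, y) = 0)"

definition good_kernel :: "('a::metric_space \<times> 'a \<Rightarrow> complex) \<Rightarrow> bool" where
  "good_kernel k \<longleftrightarrow> bounded (range k) \<and> uniformly_continuous_on UNIV k \<and> controlled k"

definition roe :: "'a::metric_space measure \<Rightarrow> 'a op set" where
  "roe M = {T. bounded_op M T \<and>
     (\<forall>\<epsilon>>0. \<exists>k. good_kernel k \<and> opnorm M (op_diff T (op_kernel M k)) < \<epsilon>)}"

definition closed_ideal :: "'a::metric_space measure \<Rightarrow> 'a op set \<Rightarrow> bool" where
  "closed_ideal M I \<longleftrightarrow>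
     I \<subseteq> roe M \<and> op_zero \<in> I \<and>
     (\<forall>S\<in>I. \<forall>T\<in>I. op_add S T \<in> I) \<and>
     (\<forall>c::complex. \<forall>T\<in>I. op_scale c T \<in> I) \<and>
     (\<forall>A\<in>roe M. \<forall>T\<in>I. A \<circ> T \<in> I \<and> T \<circ> A \<in> I) \<and>
     (\<forall>T\<in>roe M. (\<forall>\<epsilon>>0. \<exists>S\<in>I. opnorm M (op_diff T S) < \<epsilon>) \<longrightarrow> T \<in> I)"

text \<open>F^(r) = {x. inf_{y notin F} d(x,y) > r}, with inf of the empty set = +infinity.\<close>
definition rint :: "'a::metric_space set \<Rightarrow> real \<Rightarrow> 'a set" where
  "rint F r = {x. \<exists>\<delta>>r. \<forall>y. y \<notin> F \<longrightarrow> \<delta> \<le> dist x y}"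

definition coarse :: "'a::metric_space filter \<Rightarrow> bool" where
  "coarse \<eta> \<longleftrightarrow> (\<forall>F. eventually (\<lambda>x. x \<in> F) \<eta> \<longrightarrow>
                     (\<forall>r>0. eventually (\<lambda>x. x \<in> rint F r) \<eta>))"

lemma is_filter_co:
  "is_filter (\<lambda>P. \<forall>r>0. eventually (\<lambda>x. x \<in> rint {x. P x} r) (\<xi>::'a::metric_space filter))"
proof
  show "\<forall>r>0. eventually (\<lambda>x. x \<in> rint {x. True} r) \<xi>"
  proof (intro allI impI)
    fix r :: real
    have "rint {x. True} r = UNIV"
      unfolding rint_def by (auto intro!: exI[of _ "r + 1"])
    then show "eventually (\<lambda>x. x \<in> rint {x. True} r) \<xi>" by (subst \<open>rint {x. True} r = UNIV\<close>) (rule always_eventually, simp)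
  qed
next
  fix P Q
  assume P: "\<forall>r>0. eventually (\<lambda>x. x \<in> rint {x. P x} r) \<xi>"
     and Q: "\<forall>r>0. eventually (\<lambda>x. x \<in> rint {x. Q x} r) \<xi>"
  show "\<forall>r>0. eventually (\<lambda>x. x \<in> rint {x. P x \<and> Q x} r) \<xi>"
  proof (intro allI impI)
    fix r :: real assume "r > 0"
    with P Q have "eventually (\<lambda>x. x \<in> rint {x. P x} r \<and> x \<in> rint {x. Q x} r) \<xi>"
      by (auto intro: eventually_conj)
    then show "eventually (\<lambda>x. x \<in> rint {x. P x \<and> Q x} r) \<xi>"
    proof (rule eventually_mono)
      fix x assume "x \<in> rint {x. P x} r \<and> x \<in> rint {x. Q x} r"
      then obtain d1 d2 where "d1 > r" "\<forall>y. \<not> P y \<longrightarrow> d1 \<le> dist x y"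
        "d2 > r" "\<forall>y. \<not> Q y \<longrightarrow> d2 \<le> dist x y" by (auto simp: rint_def)
      then show "x \<in> rint {x. P x \<and> Q x} r"
        unfolding rint_def by (intro CollectI exI[of _ "min d1 d2"]) auto
    qed
  qed
next
  fix P Q
  assume PQ: "\<forall>x. P x \<longrightarrow> Q x" "\<forall>r>0. eventually (\<lambda>x. x \<in> rint {x. P x} r) \<xi>"
  then show "\<forall>r>0. eventually (\<lambda>x. x \<in> rint {x. Q x} r) \<xi>"
  proof (intro allI impI)
    fix r :: real assume "r > 0"
    with PQ have "eventually (\<lambda>x. x \<in> rint {x. P x} r) \<xi>" by blast
    moreover have "rint {x. P x} r \<subseteq> rint {x. Q x} r"
      using PQ(1) unfolding rint_def by blast
    ultimately show "eventually (\<lambda>x. x \<in> rint {x. Q x} r) \<xi>"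
      by (auto elim: eventually_mono)
  qed
qed

definition co :: "'a::metric_space filter \<Rightarrow> 'a filter" where
  "co \<xi> = Abs_filter (\<lambda>P. \<forall>r>0. eventually (\<lambda>x. x \<in> rint {x. P x} r) \<xi>)"

lemma eventually_co:
  "eventually P (co \<xi>) \<longleftrightarrow> (\<forall>r>0. eventually (\<lambda>x. x \<in> rint {x. P x} r) \<xi>)"
  unfolding co_def by (rule eventually_Abs_filter[OF is_filter_co])

definition J_ideal :: "'a::metric_space measure \<Rightarrow> 'a filter \<Rightarrow> 'a op set" where
  "J_ideal M \<eta> = {T \<in> roe M.
     (INF F \<in> {F. F \<in> sets M \<and> eventually (\<lambda>x. x \<in> F) \<eta>}. opnorm M (mult_ind F \<circ> T)) = 0}"

definition G_ideal :: "'a::metric_space measure \<Rightarrow> 'a filter \<Rightarrow> 'a op set" where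
  "G_ideal M \<eta> = {T \<in> roe M.
     \<forall>r>0. ((\<lambda>x. opnorm M (mult_ind (cball x r) \<circ> T)) \<longlongrightarrow> 0) \<eta>}"

end

theory Submission
  imports Defs
begin

text \<open>Both ideals consist of the operators \<open>T \<in> E(X)\<close> whose cut-offs \<open>1\<^sub>B T\<close> become small
  as \<open>B\<close> runs along a filter of sets: the balls \<open>B\<^sub>x(r)\<close> with \<open>x \<rightarrow> \<xi>\<close>, respectively the
  measurable members of \<open>\<eta>\<close>. Sums, scalar multiples, norm limits and products \<open>TA\<close> clearly
  preserve this. For products \<open>AT\<close> approximate \<open>A\<close> by a kernel operator \<open>K\<close> of propagation
  \<open>s\<close>: then \<open>1\<^sub>B K = 1\<^sub>B K 1\<^sub>B\<^sub>'\<close> whenever \<open>B'\<close> contains the \<open>s\<close>-neighbourhood of \<open>B\<close>, so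
  \<open>1\<^sub>B A T\<close> is small as soon as \<open>1\<^sub>B\<^sub>' T\<close> is. Such a small \<open>B'\<close> exists because the filter
  is coarse; for the balls this is automatic, as \<open>B\<^sub>x(r + s)\<close> contains the \<open>s\<close>-neighbourhood
  of \<open>B\<^sub>x(r)\<close>. The inclusion \<open>\<J>\<^sub>c\<^sub>o\<^sub>(\<^sub>\<xi>\<^sub>) \<subseteq> \<G>\<^sub>\<xi>\<close> holds because a member \<open>F\<close> of
  \<open>co(\<xi>)\<close> contains \<open>B\<^sub>x(r)\<close> for \<open>\<xi>\<close>-almost all \<open>x\<close>, and a coarse \<open>\<xi>\<close> is contained in
  \<open>co(\<xi>)\<close>. That \<open>E(X)\<close> is an algebra of bounded operators at all rests on Schur's test
  and on the composition of kernels of finite propagation.\<close>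

lemma L2_borel_measurable: "f \<in> L2 M \<Longrightarrow> f \<in> borel_measurable M"
  and L2_integrable: "f \<in> L2 M \<Longrightarrow> integrable M (\<lambda>x. (cmod (f x))\<^sup>2)"
  by (auto simp: L2_def)

lemma L2I: "f \<in> borel_measurable M \<Longrightarrow> integrable M (\<lambda>x. (cmod (f x))\<^sup>2) \<Longrightarrow> f \<in> L2 M"
  by (auto simp: L2_def)

lemma l2norm_nonneg: "0 \<le> l2norm M f"
  unfolding l2norm_def by (simp add: integral_nonneg_AE)

lemma l2norm_power2: "(l2norm M f)\<^sup>2 = (\<integral>x. (cmod (f x))\<^sup>2 \<partial>M)"
  unfolding l2norm_def by (simp add: integral_nonneg_AE)

lemma L2_zero: "(\<lambda>x. 0) \<in> L2 M"
  by (auto simp: L2_def)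

lemma l2norm_zero: "l2norm M (\<lambda>x. 0) = 0"
  by (simp add: l2norm_def)

lemma L2_cmult: "f \<in> L2 M \<Longrightarrow> (\<lambda>x. c * f x) \<in> L2 M"
  unfolding L2_def by (auto simp: norm_mult power_mult_distrib)

lemma l2norm_cmult: "l2norm M (\<lambda>x. c * f x) = cmod c * l2norm M f"
  unfolding l2norm_def by (simp add: norm_mult power_mult_distrib real_sqrt_mult)

lemma L2_add:
  assumes "f \<in> L2 M" "g \<in> L2 M"
  shows "(\<lambda>x. f x + g x) \<in> L2 M"
proof (rule L2I)
  show m: "(\<lambda>x. f x + g x) \<in> borel_measurable M"
    using assms by (auto simp: L2_def)
  have bound: "(cmod (f x + g x))\<^sup>2 \<le> 2 * (cmod (f x))\<^sup>2 + 2 * (cmod (g x))\<^sup>2" for x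
  proof -
    have "(cmod (f x + g x))\<^sup>2 \<le> (cmod (f x) + cmod (g x))\<^sup>2"
      by (simp add: power_mono norm_triangle_ineq)
    also have "\<dots> \<le> 2 * (cmod (f x))\<^sup>2 + 2 * (cmod (g x))\<^sup>2"
      by (smt (verit) sum_squares_bound power2_sum)
    finally show ?thesis .
  qed
  show "integrable M (\<lambda>x. (cmod (f x + g x))\<^sup>2)"
    by (rule Bochner_Integration.integrable_bound[where f="\<lambda>x. 2 * (cmod (f x))\<^sup>2 + 2 * (cmod (g x))\<^sup>2"])
       (use assms m bound in \<open>auto simp: L2_def\<close>)
qed

lemma L2_mult_ind:
  assumes "A \<in> sets M" "f \<in> L2 M"
  shows "mult_ind A f \<in> L2 M"
proof (rule L2I)
  show m: "mult_ind A f \<in> borel_measurable M"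
    using assms by (auto simp: L2_def mult_ind_def)
  show "integrable M (\<lambda>x. (cmod (mult_ind A f x))\<^sup>2)"
    by (rule Bochner_Integration.integrable_bound[OF L2_integrable[OF assms(2)]])
       (use m in \<open>auto simp: mult_ind_def indicator_def\<close>)
qed

lemma l2norm_mono:
  assumes "f \<in> L2 M" "\<And>x. cmod (g x) \<le> cmod (f x)"
  shows "l2norm M g \<le> l2norm M f"
proof (cases "integrable M (\<lambda>x. (cmod (g x))\<^sup>2)")
  case True
  have "(\<integral>x. (cmod (g x))\<^sup>2 \<partial>M) \<le> (\<integral>x. (cmod (f x))\<^sup>2 \<partial>M)"
    using True L2_integrable[OF assms(1)] assms(2) by (intro integral_mono) (auto simp: power_mono)
  then show ?thesis unfolding l2norm_def by simp
next
  case False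
  then show ?thesis unfolding l2norm_def
    by (simp add: not_integrable_integral_eq integral_nonneg_AE)
qed

lemma l2norm_mult_ind_le: "f \<in> L2 M \<Longrightarrow> l2norm M (mult_ind A f) \<le> l2norm M f"
  by (rule l2norm_mono) (auto simp: mult_ind_def indicator_def)

lemma l2norm_cong_AE:
  assumes "f \<in> borel_measurable M" "g \<in> borel_measurable M" "AE x in M. f x = g x"
  shows "l2norm M f = l2norm M g"
proof -
  have "(\<integral>x. (cmod (f x))\<^sup>2 \<partial>M) = (\<integral>x. (cmod (g x))\<^sup>2 \<partial>M)"
    using assms by (intro integral_cong_AE) (auto elim!: eventually_mono)
  then show ?thesis unfolding l2norm_def by simp
qed

lemma AE_zero_if_l2norm_eq_0:
  assumes "f \<in> L2 M" "l2norm M f = 0"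
  shows "AE x in M. f x = 0"
proof -
  have "(\<integral>x. (cmod (f x))\<^sup>2 \<partial>M) = 0"
    using assms(2) l2norm_power2[of M f] by simp
  then have "AE x in M. (cmod (f x))\<^sup>2 = 0"
    using L2_integrable[OF assms(1)] by (subst (asm) integral_nonneg_eq_0_iff_AE) auto
  then show ?thesis by (auto elim!: eventually_mono)
qed

text \<open>If \<open>A\<close> or \<open>B\<close> vanishes, the optimal weight \<open>t\<close> is not attained but only approached.\<close>
lemma le_sqrt_mult_sqrt_if_AM_GM:
  fixes I A B :: real
  assumes "A \<ge> 0" "B \<ge> 0" and AM: "\<And>t. t > 0 \<Longrightarrow> I \<le> (t * A + B / t) / 2"
  shows "I \<le> sqrt A * sqrt B"
proof (cases "A > 0 \<and> B > 0")
  case True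
  then have "I \<le> (sqrt B / sqrt A * A + B / (sqrt B / sqrt A)) / 2"
    by (intro AM) simp
  also have "\<dots> = sqrt A * sqrt B"
    using True by (simp add: field_simps)
  finally show ?thesis .
next
  case False
  have "I \<le> e" if e: "e > 0" for e
  proof (cases "A = 0")
    case True
    have "I \<le> ((B + 1) / e * A + B / ((B + 1) / e)) / 2"
      using e assms by (intro AM) (simp add: add_nonneg_pos)
    also have "\<dots> = e * (B / (B + 1)) / 2"
      using True assms by (simp add: field_simps)
    also have "\<dots> \<le> e"
      using e assms by (simp add: field_simps)
    finally show ?thesis .
  next
    case False
    then have "B = 0" using \<open>\<not> (A > 0 \<and> B > 0)\<close> assms by auto
    have "I \<le> (e / (A + 1) * A + B / (e / (A + 1))) / 2"
      using e assms by (intro AM) (simp add: add_nonneg_pos)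
    also have "\<dots> = e * (A / (A + 1)) / 2"
      using \<open>B = 0\<close> by simp
    also have "\<dots> \<le> e"
      using e assms by (simp add: field_simps)
    finally show ?thesis .
  qed
  then have "I \<le> 0" by (meson dense not_le)
  with assms show ?thesis by (smt (verit) mult_nonneg_nonneg real_sqrt_ge_zero)
qed

lemma
  fixes f g :: "'a \<Rightarrow> real"
  assumes [measurable]: "f \<in> borel_measurable M" "g \<in> borel_measurable M"
    and f2: "integrable M (\<lambda>x. (f x)\<^sup>2)" and g2: "integrable M (\<lambda>x. (g x)\<^sup>2)"
  shows Cauchy_Schwarz_integrable: "integrable M (\<lambda>x. \<bar>f x * g x\<bar>)"
    and Cauchy_Schwarz_integral:
      "(\<integral>x. \<bar>f x * g x\<bar> \<partial>M) \<le> sqrt (\<integral>x. (f x)\<^sup>2 \<partial>M) * sqrt (\<integral>x. (g x)\<^sup>2 \<partial>M)"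
proof -
  have AM_GM: "\<bar>f x * g x\<bar> \<le> (t * (f x)\<^sup>2 + (g x)\<^sup>2 / t) / 2" if "t > 0" for t x
  proof -
    have "0 \<le> (t * \<bar>f x\<bar> - \<bar>g x\<bar>)\<^sup>2" by simp
    then have "2 * t * \<bar>f x * g x\<bar> \<le> t\<^sup>2 * (f x)\<^sup>2 + (g x)\<^sup>2"
      by (simp add: power2_eq_square algebra_simps abs_mult)
    then show ?thesis
      using that by (simp add: field_simps power2_eq_square)
  qed
  show int: "integrable M (\<lambda>x. \<bar>f x * g x\<bar>)"
    by (rule Bochner_Integration.integrable_bound[where f="\<lambda>x. (1 * (f x)\<^sup>2 + (g x)\<^sup>2 / 1) / 2"])
       (use f2 g2 AM_GM[of 1] in auto)
  show "(\<integral>x. \<bar>f x * g x\<bar> \<partial>M) \<le> sqrt (\<integral>x. (f x)\<^sup>2 \<partial>M) * sqrt (\<integral>x. (g x)\<^sup>2 \<partial>M)"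
  proof (rule le_sqrt_mult_sqrt_if_AM_GM)
    fix t :: real assume "t > 0"
    have "(\<integral>x. \<bar>f x * g x\<bar> \<partial>M) \<le> (\<integral>x. (t * (f x)\<^sup>2 + (g x)\<^sup>2 / t) / 2 \<partial>M)"
      using f2 g2 AM_GM[OF \<open>t > 0\<close>] by (intro integral_mono[OF int]) auto
    then show "(\<integral>x. \<bar>f x * g x\<bar> \<partial>M) \<le> (t * (\<integral>x. (f x)\<^sup>2 \<partial>M) + (\<integral>x. (g x)\<^sup>2 \<partial>M) / t) / 2"
      using f2 g2 by simp
  qed (auto intro: integral_nonneg_AE)
qed

lemma l2norm_add_le:
  assumes f: "f \<in> L2 M" and g: "g \<in> L2 M"
  shows "l2norm M (\<lambda>x. f x + g x) \<le> l2norm M f + l2norm M g"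
proof -
  have [measurable]: "f \<in> borel_measurable M" "g \<in> borel_measurable M"
    using f g by (auto simp: L2_def)
  have f2: "integrable M (\<lambda>x. (cmod (f x))\<^sup>2)" and g2: "integrable M (\<lambda>x. (cmod (g x))\<^sup>2)"
    using f g by (auto simp: L2_def)
  have fg: "integrable M (\<lambda>x. cmod (f x) * cmod (g x))"
    using Cauchy_Schwarz_integrable[of "\<lambda>x. cmod (f x)" M "\<lambda>x. cmod (g x)"] f2 g2 by simp
  have CS: "(\<integral>x. cmod (f x) * cmod (g x) \<partial>M) \<le> l2norm M f * l2norm M g"
    using Cauchy_Schwarz_integral[of "\<lambda>x. cmod (f x)" M "\<lambda>x. cmod (g x)"] f2 g2
    by (simp add: l2norm_def)
  have "(l2norm M (\<lambda>x. f x + g x))\<^sup>2 = (\<integral>x. (cmod (f x + g x))\<^sup>2 \<partial>M)"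
    by (rule l2norm_power2)
  also have "\<dots> \<le> (\<integral>x. (cmod (f x))\<^sup>2 + 2 * (cmod (f x) * cmod (g x)) + (cmod (g x))\<^sup>2 \<partial>M)"
  proof (rule integral_mono[OF L2_integrable[OF L2_add[OF f g]]])
    show "integrable M (\<lambda>x. (cmod (f x))\<^sup>2 + 2 * (cmod (f x) * cmod (g x)) + (cmod (g x))\<^sup>2)"
      using f2 g2 fg by auto
    fix x
    have "(cmod (f x + g x))\<^sup>2 \<le> (cmod (f x) + cmod (g x))\<^sup>2"
      by (simp add: power_mono norm_triangle_ineq)
    then show "(cmod (f x + g x))\<^sup>2 \<le> (cmod (f x))\<^sup>2 + 2 * (cmod (f x) * cmod (g x)) + (cmod (g x))\<^sup>2"
      by (simp add: power2_sum)
  qed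
  also have "\<dots> = (l2norm M f)\<^sup>2 + 2 * (\<integral>x. cmod (f x) * cmod (g x) \<partial>M) + (l2norm M g)\<^sup>2"
    using f2 g2 fg by (simp add: l2norm_power2)
  also have "\<dots> \<le> (l2norm M f + l2norm M g)\<^sup>2"
    using CS by (simp add: power2_sum)
  finally show ?thesis
    using l2norm_nonneg[of M f] l2norm_nonneg[of M g] by (meson add_nonneg_nonneg power2_le_imp_le)
qed

lemma power2_integral_indicator_le:
  fixes g :: "'a \<Rightarrow> real"
  assumes A: "A \<in> sets M" "emeasure M A \<noteq> top"
    and g: "g \<in> borel_measurable M" "integrable M (\<lambda>y. (g y)\<^sup>2)"
  shows "(\<integral>y. indicator A y * \<bar>g y\<bar> \<partial>M)\<^sup>2 \<le> measure M A * (\<integral>y. indicator A y * (g y)\<^sup>2 \<partial>M)"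
proof -
  have ind_sq: "(\<lambda>y. (indicator A y :: real)\<^sup>2) = indicator A"
    by (auto simp: fun_eq_iff indicator_def)
  have ind_g_sq: "(\<lambda>y. (indicator A y * g y)\<^sup>2) = (\<lambda>y. indicator A y * (g y)\<^sup>2)"
    by (auto simp: fun_eq_iff indicator_def)
  define a where "a = (\<integral>y. indicator A y * \<bar>g y\<bar> \<partial>M)"
  have "a = (\<integral>y. \<bar>indicator A y * (indicator A y * g y)\<bar> \<partial>M)"
    unfolding a_def by (rule Bochner_Integration.integral_cong) (auto simp: indicator_def)
  also have "\<dots> \<le> sqrt (\<integral>y. (indicator A y)\<^sup>2 \<partial>M) * sqrt (\<integral>y. (indicator A y * g y)\<^sup>2 \<partial>M)"
  proof (rule Cauchy_Schwarz_integral)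
    show "integrable M (\<lambda>y. (indicator A y :: real)\<^sup>2)"
      unfolding ind_sq using A by (intro integrable_real_indicator) (auto simp: top.not_eq_extremum)
    show "integrable M (\<lambda>y. (indicator A y * g y)\<^sup>2)"
      unfolding ind_g_sq using integrable_real_mult_indicator[OF A(1) g(2)] by (simp add: mult.commute)
  qed (use A g in auto)
  also have "\<dots> = sqrt (measure M A) * sqrt (\<integral>y. indicator A y * (g y)\<^sup>2 \<partial>M)"
    unfolding ind_sq ind_g_sq using A by simp
  finally have a_le: "a \<le> sqrt (measure M A) * sqrt (\<integral>y. indicator A y * (g y)\<^sup>2 \<partial>M)" .
  have "0 \<le> a" unfolding a_def by (intro integral_nonneg_AE) auto
  with a_le have "a\<^sup>2 \<le> (sqrt (measure M A) * sqrt (\<integral>y. indicator A y * (g y)\<^sup>2 \<partial>M))\<^sup>2"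
    by (rule power_mono)
  also have "\<dots> = measure M A * (\<integral>y. indicator A y * (g y)\<^sup>2 \<partial>M)"
    by (simp add: power_mult_distrib integral_nonneg_AE)
  finally show ?thesis by (simp add: a_def)
qed

lemma bounded_opI:
  assumes "\<And>f. f \<in> L2 M \<Longrightarrow> T f \<in> L2 M"
    and "\<And>f g. f \<in> L2 M \<Longrightarrow> g \<in> L2 M \<Longrightarrow> AE x in M. f x = g x \<Longrightarrow> AE x in M. T f x = T g x"
    and "\<And>f g. f \<in> L2 M \<Longrightarrow> g \<in> L2 M \<Longrightarrow> AE x in M. T (\<lambda>y. f y + g y) x = T f x + T g x"
    and "\<And>f c. f \<in> L2 M \<Longrightarrow> AE x in M. T (\<lambda>y. c * f y) x = c * T f x"
    and "\<And>f. f \<in> L2 M \<Longrightarrow> l2norm M (T f) \<le> C * l2norm M f"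
  shows "bounded_op M T"
  unfolding bounded_op_def using assms by blast

lemma bounded_opD:
  assumes "bounded_op M T"
  shows "\<And>f. f \<in> L2 M \<Longrightarrow> T f \<in> L2 M"
    and "\<And>f g. f \<in> L2 M \<Longrightarrow> g \<in> L2 M \<Longrightarrow> AE x in M. f x = g x \<Longrightarrow> AE x in M. T f x = T g x"
    and "\<And>f g. f \<in> L2 M \<Longrightarrow> g \<in> L2 M \<Longrightarrow> AE x in M. T (\<lambda>y. f y + g y) x = T f x + T g x"
    and "\<And>f c. f \<in> L2 M \<Longrightarrow> AE x in M. T (\<lambda>y. c * f y) x = c * T f x"
    and "\<exists>C. \<forall>f\<in>L2 M. l2norm M (T f) \<le> C * l2norm M f"
  using assms unfolding bounded_op_def by blast+

lemma opnorm_leI: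
  assumes "C \<ge> 0" "\<And>f. f \<in> L2 M \<Longrightarrow> l2norm M (T f) \<le> C * l2norm M f"
  shows "opnorm M T \<le> C"
  unfolding opnorm_def
proof (rule cSup_least)
  show "{l2norm M (T f) |f. f \<in> L2 M \<and> l2norm M f \<le> 1} \<noteq> {}"
    using L2_zero[of M] l2norm_zero[of M] by force
  fix y assume "y \<in> {l2norm M (T f) |f. f \<in> L2 M \<and> l2norm M f \<le> 1}"
  then obtain f where f: "f \<in> L2 M" "l2norm M f \<le> 1" "y = l2norm M (T f)" by auto
  have "y \<le> C * l2norm M f" using assms(2) f by simp
  also have "\<dots> \<le> C" using f(2) assms(1) by (simp add: mult_left_le)
  finally show "y \<le> C" .
qed

lemma l2norm_le_opnorm:
  assumes T: "bounded_op M T" and "f \<in> L2 M" "l2norm M f \<le> 1"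
  shows "l2norm M (T f) \<le> opnorm M T"
  unfolding opnorm_def
proof (rule cSup_upper)
  obtain C where C: "\<forall>f\<in>L2 M. l2norm M (T f) \<le> C * l2norm M f"
    using bounded_opD(5)[OF T] by blast
  have "l2norm M (T g) \<le> max C 0" if "g \<in> L2 M" "l2norm M g \<le> 1" for g
  proof -
    have "l2norm M (T g) \<le> C * l2norm M g" using C that(1) by simp
    also have "\<dots> \<le> max C 0 * l2norm M g" by (simp add: l2norm_nonneg mult_right_mono)
    also have "\<dots> \<le> max C 0" using that(2) by (simp add: mult_left_le)
    finally show ?thesis .
  qed
  then show "bdd_above {l2norm M (T f) |f. f \<in> L2 M \<and> l2norm M f \<le> 1}"
    by (intro bdd_aboveI[where M="max C 0"]) auto
qed (use assms in auto)

lemma opnorm_nonneg: "bounded_op M T \<Longrightarrow> 0 \<le> opnorm M T"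
  using l2norm_le_opnorm[of M T "\<lambda>x. 0"] L2_zero[of M] l2norm_zero[of M]
    l2norm_nonneg[of M "T (\<lambda>x. 0)"]
  by simp

lemma l2norm_op_le:
  assumes T: "bounded_op M T" and f: "f \<in> L2 M"
  shows "l2norm M (T f) \<le> opnorm M T * l2norm M f"
proof (cases "l2norm M f = 0")
  case True
  have "AE x in M. T f x = T (\<lambda>y. 0) x"
    using bounded_opD(2)[OF T f L2_zero] AE_zero_if_l2norm_eq_0[OF f True] by simp
  moreover have "AE x in M. T (\<lambda>y. 0) x = 0"
    using bounded_opD(4)[OF T L2_zero, of 0] by simp
  ultimately have "AE x in M. T f x = 0" by eventually_elim simp
  then have "l2norm M (T f) = l2norm M (\<lambda>x. 0)"
    using bounded_opD(1)[OF T f] by (intro l2norm_cong_AE) (auto simp: L2_def)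
  then show ?thesis using True by (simp add: l2norm_zero)
next
  case False
  define n where "n = l2norm M f"
  have n: "n > 0" using False l2norm_nonneg[of M f] by (simp add: n_def)
  define g where "g = (\<lambda>y. complex_of_real (1 / n) * f y)"
  have g: "g \<in> L2 M" unfolding g_def by (rule L2_cmult[OF f])
  have "l2norm M g = 1" unfolding g_def l2norm_cmult using n by (simp add: n_def norm_divide)
  then have "l2norm M (T g) \<le> opnorm M T" by (intro l2norm_le_opnorm[OF T g]) simp
  moreover have "l2norm M (T g) = l2norm M (\<lambda>x. complex_of_real (1 / n) * T f x)"
    using bounded_opD(4)[OF T f, of "complex_of_real (1 / n)"] bounded_opD(1)[OF T f]
      bounded_opD(1)[OF T g]
    unfolding g_def by (intro l2norm_cong_AE) (auto simp: L2_def)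
  moreover have "\<dots> = l2norm M (T f) / n"
    unfolding l2norm_cmult using n by (simp add: norm_divide)
  ultimately have "l2norm M (T f) / n \<le> opnorm M T" by simp
  then show ?thesis using n by (simp add: n_def divide_le_eq mult.commute)
qed

lemma opnorm_cong:
  assumes "\<And>f. f \<in> L2 M \<Longrightarrow> S f = T f"
  shows "opnorm M S = opnorm M T"
proof -
  have "{l2norm M (S f) |f. f \<in> L2 M \<and> l2norm M f \<le> 1} = {l2norm M (T f) |f. f \<in> L2 M \<and> l2norm M f \<le> 1}"
    using assms by metis
  then show ?thesis unfolding opnorm_def by simp
qed

lemma bounded_op_comp:
  assumes S: "bounded_op M S" and T: "bounded_op M T"
  shows "bounded_op M (S \<circ> T)"
proof (rule bounded_opI[where C="opnorm M S * opnorm M T"])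
  note S' = bounded_opD[OF S] and T' = bounded_opD[OF T]
  fix f assume f: "f \<in> L2 M"
  show "(S \<circ> T) f \<in> L2 M" using S'(1) T'(1) f by simp
  have "l2norm M ((S \<circ> T) f) \<le> opnorm M S * l2norm M (T f)"
    using l2norm_op_le[OF S T'(1)[OF f]] by simp
  also have "\<dots> \<le> opnorm M S * (opnorm M T * l2norm M f)"
    by (rule mult_left_mono[OF l2norm_op_le[OF T f] opnorm_nonneg[OF S]])
  finally show "l2norm M ((S \<circ> T) f) \<le> opnorm M S * opnorm M T * l2norm M f"
    by (simp add: mult.assoc)
  fix c
  have "AE x in M. S (T (\<lambda>y. c * f y)) x = S (\<lambda>y. c * T f y) x"
    using T'(4)[OF f, of c] by (intro S'(2) T'(1) f L2_cmult) auto
  with S'(4)[OF T'(1)[OF f]]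
  show "AE x in M. (S \<circ> T) (\<lambda>y. c * f y) x = c * (S \<circ> T) f x"
    by eventually_elim simp
next
  note S' = bounded_opD[OF S] and T' = bounded_opD[OF T]
  fix f g assume f: "f \<in> L2 M" and g: "g \<in> L2 M"
  have "AE x in M. S (T (\<lambda>y. f y + g y)) x = S (\<lambda>y. T f y + T g y) x"
    using T'(3)[OF f g] by (intro S'(2) T'(1) f g L2_add) auto
  with S'(3)[OF T'(1)[OF f] T'(1)[OF g]]
  show "AE x in M. (S \<circ> T) (\<lambda>y. f y + g y) x = (S \<circ> T) f x + (S \<circ> T) g x"
    by eventually_elim simp
  assume "AE x in M. f x = g x"
  then show "AE x in M. (S \<circ> T) f x = (S \<circ> T) g x"
    using S'(2)[OF T'(1)[OF f] T'(1)[OF g] T'(2)[OF f g]] by simp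
qed

lemma opnorm_comp_le:
  assumes S: "bounded_op M S" and T: "bounded_op M T"
  shows "opnorm M (S \<circ> T) \<le> opnorm M S * opnorm M T"
proof (rule opnorm_leI)
  show "0 \<le> opnorm M S * opnorm M T" using opnorm_nonneg[OF S] opnorm_nonneg[OF T] by simp
  fix f assume f: "f \<in> L2 M"
  have "l2norm M ((S \<circ> T) f) \<le> opnorm M S * l2norm M (T f)"
    using l2norm_op_le[OF S bounded_opD(1)[OF T f]] by simp
  also have "\<dots> \<le> opnorm M S * (opnorm M T * l2norm M f)"
    by (rule mult_left_mono[OF l2norm_op_le[OF T f] opnorm_nonneg[OF S]])
  finally show "l2norm M ((S \<circ> T) f) \<le> opnorm M S * opnorm M T * l2norm M f"
    by (simp add: mult.assoc)
qed

lemma l2norm_op_add_le: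
  assumes S: "bounded_op M S" and T: "bounded_op M T" and f: "f \<in> L2 M"
  shows "l2norm M (op_add S T f) \<le> (opnorm M S + opnorm M T) * l2norm M f"
proof -
  have "l2norm M (op_add S T f) \<le> l2norm M (S f) + l2norm M (T f)"
    unfolding op_add_def by (intro l2norm_add_le bounded_opD(1)[OF S] bounded_opD(1)[OF T] f)
  also have "\<dots> \<le> opnorm M S * l2norm M f + opnorm M T * l2norm M f"
    by (intro add_mono l2norm_op_le S T f)
  finally show ?thesis by (simp add: algebra_simps)
qed

lemma bounded_op_add:
  assumes S: "bounded_op M S" and T: "bounded_op M T"
  shows "bounded_op M (op_add S T)"
proof (rule bounded_opI[where C="opnorm M S + opnorm M T"])
  note S' = bounded_opD[OF S] and T' = bounded_opD[OF T]
  fix f assume f: "f \<in> L2 M"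
  show "op_add S T f \<in> L2 M" unfolding op_add_def using S'(1) T'(1) f by (intro L2_add)
  show "l2norm M (op_add S T f) \<le> (opnorm M S + opnorm M T) * l2norm M f"
    by (rule l2norm_op_add_le[OF S T f])
  fix c
  show "AE x in M. op_add S T (\<lambda>y. c * f y) x = c * op_add S T f x"
    using S'(4)[OF f, of c] T'(4)[OF f, of c] unfolding op_add_def
    by eventually_elim (simp add: algebra_simps)
next
  note S' = bounded_opD[OF S] and T' = bounded_opD[OF T]
  fix f g assume f: "f \<in> L2 M" and g: "g \<in> L2 M"
  show "AE x in M. op_add S T (\<lambda>y. f y + g y) x = op_add S T f x + op_add S T g x"
    using S'(3)[OF f g] T'(3)[OF f g] unfolding op_add_def
    by eventually_elim (simp add: algebra_simps)
  assume ae: "AE x in M. f x = g x"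
  show "AE x in M. op_add S T f x = op_add S T g x"
    using S'(2)[OF f g ae] T'(2)[OF f g ae] unfolding op_add_def by eventually_elim simp
qed

lemma opnorm_add_le:
  assumes "bounded_op M S" "bounded_op M T"
  shows "opnorm M (op_add S T) \<le> opnorm M S + opnorm M T"
  using assms opnorm_nonneg[OF assms(1)] opnorm_nonneg[OF assms(2)]
  by (intro opnorm_leI l2norm_op_add_le) auto

lemma bounded_op_scale:
  assumes T: "bounded_op M T"
  shows "bounded_op M (op_scale c T)"
proof (rule bounded_opI[where C="cmod c * opnorm M T"])
  note T' = bounded_opD[OF T]
  fix f assume f: "f \<in> L2 M"
  show "op_scale c T f \<in> L2 M" unfolding op_scale_def using T'(1) f by (intro L2_cmult)
  show "l2norm M (op_scale c T f) \<le> cmod c * opnorm M T * l2norm M f"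
    unfolding op_scale_def l2norm_cmult mult.assoc
    by (intro mult_left_mono l2norm_op_le T f) simp
  fix d
  show "AE x in M. op_scale c T (\<lambda>y. d * f y) x = d * op_scale c T f x"
    using T'(4)[OF f, of d] unfolding op_scale_def by eventually_elim (simp add: algebra_simps)
next
  note T' = bounded_opD[OF T]
  fix f g assume f: "f \<in> L2 M" and g: "g \<in> L2 M"
  show "AE x in M. op_scale c T (\<lambda>y. f y + g y) x = op_scale c T f x + op_scale c T g x"
    using T'(3)[OF f g] unfolding op_scale_def by eventually_elim (simp add: algebra_simps)
  assume ae: "AE x in M. f x = g x"
  show "AE x in M. op_scale c T f x = op_scale c T g x"
    using T'(2)[OF f g ae] unfolding op_scale_def by eventually_elim simp
qed

lemma opnorm_scale_le:
  assumes T: "bounded_op M T"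
  shows "opnorm M (op_scale c T) \<le> cmod c * opnorm M T"
proof (rule opnorm_leI)
  show "0 \<le> cmod c * opnorm M T" using opnorm_nonneg[OF T] by simp
  fix f assume f: "f \<in> L2 M"
  show "l2norm M (op_scale c T f) \<le> cmod c * opnorm M T * l2norm M f"
    unfolding op_scale_def l2norm_cmult mult.assoc
    by (intro mult_left_mono l2norm_op_le T f) simp
qed

lemma op_diff_eq_add_scale: "op_diff S T = op_add S (op_scale (-1) T)"
  by (auto simp: op_diff_def op_add_def op_scale_def fun_eq_iff)

lemma bounded_op_diff: "bounded_op M S \<Longrightarrow> bounded_op M T \<Longrightarrow> bounded_op M (op_diff S T)"
  unfolding op_diff_eq_add_scale by (intro bounded_op_add bounded_op_scale)

lemma opnorm_diff_le:
  assumes "bounded_op M S" "bounded_op M T"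
  shows "opnorm M (op_diff S T) \<le> opnorm M S + opnorm M T"
proof -
  have "opnorm M (op_diff S T) \<le> opnorm M S + opnorm M (op_scale (-1) T)"
    unfolding op_diff_eq_add_scale using assms by (intro opnorm_add_le bounded_op_scale)
  also have "opnorm M (op_scale (-1) T) \<le> opnorm M T"
    using opnorm_scale_le[OF assms(2), of "-1"] by simp
  finally show ?thesis by simp
qed

lemma bounded_op_zero: "bounded_op M op_zero"
  by (rule bounded_opI[where C=0]) (auto simp: op_zero_def L2_zero l2norm_zero)

lemma opnorm_zero: "opnorm M op_zero = 0"
proof (rule antisym)
  show "opnorm M op_zero \<le> 0" by (rule opnorm_leI) (simp_all add: op_zero_def l2norm_zero)
qed (rule opnorm_nonneg[OF bounded_op_zero])

lemma bounded_op_mult_ind: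
  assumes A: "A \<in> sets M"
  shows "bounded_op M (mult_ind A)"
proof (rule bounded_opI[where C=1])
  fix f assume f: "f \<in> L2 M"
  show "mult_ind A f \<in> L2 M" by (rule L2_mult_ind[OF A f])
  show "l2norm M (mult_ind A f) \<le> 1 * l2norm M f" using l2norm_mult_ind_le[OF f] by simp
  fix c show "AE x in M. mult_ind A (\<lambda>y. c * f y) x = c * mult_ind A f x"
    by (simp add: mult_ind_def)
next
  fix f g assume "f \<in> L2 M" "g \<in> L2 M"
  show "AE x in M. mult_ind A (\<lambda>y. f y + g y) x = mult_ind A f x + mult_ind A g x"
    by (simp add: mult_ind_def algebra_simps)
  assume "AE x in M. f x = g x"
  then show "AE x in M. mult_ind A f x = mult_ind A g x"
    unfolding mult_ind_def by eventually_elim simp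
qed

lemma bounded_op_mult_ind_comp:
  "A \<in> sets M \<Longrightarrow> bounded_op M T \<Longrightarrow> bounded_op M (mult_ind A \<circ> T)"
  by (intro bounded_op_comp bounded_op_mult_ind)

lemma opnorm_mult_ind_comp_mono:
  assumes T: "bounded_op M T" and B: "B \<in> sets M" and "A \<subseteq> B"
  shows "opnorm M (mult_ind A \<circ> T) \<le> opnorm M (mult_ind B \<circ> T)"
proof (rule opnorm_leI)
  have BT: "bounded_op M (mult_ind B \<circ> T)" by (rule bounded_op_mult_ind_comp[OF B T])
  show "0 \<le> opnorm M (mult_ind B \<circ> T)" by (rule opnorm_nonneg[OF BT])
  fix f assume f: "f \<in> L2 M"
  have "l2norm M ((mult_ind A \<circ> T) f) \<le> l2norm M ((mult_ind B \<circ> T) f)"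
    using bounded_opD(1)[OF BT f] \<open>A \<subseteq> B\<close>
    by (intro l2norm_mono) (auto simp: mult_ind_def indicator_def)
  also have "\<dots> \<le> opnorm M (mult_ind B \<circ> T) * l2norm M f" by (rule l2norm_op_le[OF BT f])
  finally show "l2norm M ((mult_ind A \<circ> T) f) \<le> opnorm M (mult_ind B \<circ> T) * l2norm M f" .
qed

lemma opnorm_mult_ind_comp_le:
  assumes T: "bounded_op M T"
  shows "opnorm M (mult_ind A \<circ> T) \<le> opnorm M T"
proof (rule opnorm_leI)
  show "0 \<le> opnorm M T" by (rule opnorm_nonneg[OF T])
  fix f assume f: "f \<in> L2 M"
  have "l2norm M ((mult_ind A \<circ> T) f) \<le> l2norm M (T f)"
    using l2norm_mult_ind_le[OF bounded_opD(1)[OF T f]] by simp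
  also have "\<dots> \<le> opnorm M T * l2norm M f" by (rule l2norm_op_le[OF T f])
  finally show "l2norm M ((mult_ind A \<circ> T) f) \<le> opnorm M T * l2norm M f" .
qed

section \<open>Proper metric measure spaces with uniformly bounded balls\<close>

locale roe_space =
  fixes M :: "'a::metric_space measure"
  assumes sets_eq_borel: "sets M = sets borel"
    and compact_cball: "\<And>(x::'a) r. compact (cball x r)"
    and cball_measure_bounded: "\<And>r. r > 0 \<Longrightarrow> \<exists>C::real. \<forall>x. emeasure M (cball x r) \<le> ennreal C"
begin

lemma space_eq [simp]: "space M = UNIV"
  using sets_eq_imp_space_eq[OF sets_eq_borel] by simp

lemma measurable_eq_borel: "measurable M N = measurable borel N"
  by (rule measurable_cong_sets[OF sets_eq_borel refl])

lemma open_in_sets: "open U \<Longrightarrow> U \<in> sets M"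
  using sets_eq_borel by simp

lemma cball_in_sets [simp, measurable]: "cball x r \<in> sets M"
  using sets_eq_borel by simp

lemma continuous_imp_borel_measurable: "continuous_on UNIV f \<Longrightarrow> f \<in> borel_measurable M"
  unfolding measurable_eq_borel by (rule borel_measurable_continuous_onI)

lemma emeasure_cball_finite: "emeasure M (cball x r) \<noteq> top"
proof -
  have "max r 1 > 0" by simp
  then obtain C where "emeasure M (cball x (max r 1)) \<le> ennreal C"
    using cball_measure_bounded by blast
  moreover have "emeasure M (cball x r) \<le> emeasure M (cball x (max r 1))"
    by (intro emeasure_mono) auto
  ultimately have "emeasure M (cball x r) \<le> ennreal C" by (rule order_trans[rotated])
  then show ?thesis by (metis ennreal_neq_top neq_top_trans)
qed

lemma emeasure_cball: "emeasure M (cball x r) = ennreal (measure M (cball x r))"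
  by (rule emeasure_eq_ennreal_measure[OF emeasure_cball_finite])

lemma measure_cball_bounded:
  obtains C where "C \<ge> 0" "\<And>x. measure M (cball x r) \<le> C"
proof -
  have "max r 1 > 0" by simp
  then obtain C where C: "\<And>x. emeasure M (cball x (max r 1)) \<le> ennreal C"
    using cball_measure_bounded by blast
  have "measure M (cball x r) \<le> max C 0" for x
  proof -
    have "emeasure M (cball x r) \<le> emeasure M (cball x (max r 1))"
      by (intro emeasure_mono) auto
    also have "\<dots> \<le> ennreal C" by (rule C)
    finally show ?thesis
      by (cases "C \<ge> 0") (auto simp: emeasure_cball ennreal_le_iff2)
  qed
  then show ?thesis by (intro that[of "max C 0"]) auto
qed

lemma sigma_finite: "sigma_finite_measure M"
proof
  fix x0 :: 'a
  show "\<exists>A. countable A \<and> A \<subseteq> sets M \<and> \<Union> A = space M \<and> (\<forall>a\<in>A. emeasure M a \<noteq> \<infinity>)"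
  proof (intro exI[of _ "range (\<lambda>n::nat. cball x0 (real n))"] conjI)
    show "\<Union> (range (\<lambda>n::nat. cball x0 (real n))) = space M"
    proof auto
      fix x :: 'a
      obtain n :: nat where "dist x0 x \<le> real n" using real_arch_simple by blast
      then show "\<exists>n::nat. dist x0 x \<le> real n" by blast
    qed
  qed (use emeasure_cball_finite in \<open>auto simp: top_unique\<close>)
qed

lemma pair_sigma_finite: "pair_sigma_finite M M"
  using sigma_finite by (simp add: pair_sigma_finite_def)

lemma dense_sequence:
  obtains D :: "nat \<Rightarrow> 'a" where "\<And>x e. e > 0 \<Longrightarrow> \<exists>i. dist x (D i) < e"
proof -
  fix x0 :: 'a
  have "\<exists>N. finite N \<and> cball x0 r \<subseteq> (\<Union>x\<in>N. ball x e)" if "e > 0" for r e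
    using compact_cball[of x0 r] that unfolding compact_eq_totally_bounded by blast
  then have net: "\<exists>N. finite N \<and> cball x0 (real n) \<subseteq> (\<Union>x\<in>N. ball x (1 / Suc m))" for n m :: nat
    by simp
  define N where "N n m = (SOME N. finite N \<and> cball x0 (real n) \<subseteq> (\<Union>x\<in>N. ball x (1 / Suc m)))"
    for n m :: nat
  have N: "finite (N n m) \<and> cball x0 (real n) \<subseteq> (\<Union>x\<in>N n m. ball x (1 / Suc m))" for n m
    unfolding N_def by (rule someI_ex[OF net])
  define U where "U = insert x0 (\<Union>n m. N n m)"
  have "countable U"
    unfolding U_def by (intro countable_insert countable_UN countableI_type countable_finite) (use N in blast)
  then have range_D: "range (from_nat_into U) = U"
    by (simp add: U_def)
  show ?thesis
  proof (rule that[of "from_nat_into U"])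
    fix x :: 'a and e :: real assume "e > 0"
    obtain n :: nat where "dist x0 x \<le> real n" using real_arch_simple by blast
    moreover obtain m :: nat where m: "1 / Suc m < e"
      using \<open>e > 0\<close> by (metis nat_approx_posE)
    ultimately obtain y where y: "y \<in> N n m" "dist y x < 1 / Suc m" using N[of n m] by auto
    then have "y \<in> range (from_nat_into U)" using range_D unfolding U_def by auto
    with y m show "\<exists>i. dist x (from_nat_into U i) < e"
      by (metis dist_commute less_trans rangeE)
  qed
qed

text \<open>The type class provides no second countability; a measurable nearest-point map onto a
  dense sequence, which exists by properness, takes its place.\<close>
lemma measurable_discretization:
  obtains D :: "nat \<Rightarrow> 'a" and idx :: "nat \<Rightarrow> 'a \<Rightarrow> nat"
  where "\<And>m. idx m \<in> measurable M (count_space UNIV)" and "\<And>x. (\<lambda>m. D (idx m x)) \<longlonglongrightarrow> x"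
proof -
  obtain D :: "nat \<Rightarrow> 'a" where D: "\<And>x e. e > 0 \<Longrightarrow> \<exists>i. dist x (D i) < e"
    using dense_sequence by blast
  define idx where "idx m x = (LEAST i. dist x (D i) < 1 / Suc m)" for m :: nat and x
  have idx_measurable: "idx m \<in> measurable M (count_space UNIV)" for m
    unfolding idx_def
  proof (rule measurable_Least)
    fix i
    have "{x \<in> space M. dist x (D i) < 1 / Suc m} = ball (D i) (1 / Suc m)"
      by (auto simp: dist_commute)
    then show "(\<lambda>x. dist x (D i) < 1 / Suc m) \<in> measurable M (count_space UNIV)"
      using open_in_sets[of "ball (D i) (1 / Suc m)"] by (simp add: pred_def)
  qed
  have idx_dist: "dist x (D (idx m x)) < 1 / Suc m" for m x
    unfolding idx_def by (rule LeastI_ex) (rule D, simp)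
  have "(\<lambda>m. D (idx m x)) \<longlonglongrightarrow> x" for x
  proof -
    have "(\<lambda>m. dist (D (idx m x)) x) \<longlonglongrightarrow> 0"
    proof (rule tendsto_sandwich[of "\<lambda>_. 0" _ _ "\<lambda>m. 1 / Suc m"])
      show "\<forall>\<^sub>F m in sequentially. dist (D (idx m x)) x \<le> 1 / Suc m"
        using idx_dist by (simp add: dist_commute less_imp_le)
      show "(\<lambda>m. 1 / real (Suc m)) \<longlonglongrightarrow> 0"
        by (rule LIMSEQ_inverse_real_of_nat[unfolded inverse_eq_divide])
    qed simp_all
    then show ?thesis using tendsto_dist_iff by blast
  qed
  with idx_measurable show ?thesis by (rule that)
qed

lemma borel_measurable_pair_continuous:
  fixes g :: "'a \<times> 'a \<Rightarrow> 'b::metric_space"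
  assumes g: "continuous_on UNIV g"
  shows "g \<in> borel_measurable (M \<Otimes>\<^sub>M M)"
proof -
  obtain idx and D :: "nat \<Rightarrow> 'a" where idx_measurable: "\<And>m. idx m \<in> measurable M (count_space UNIV)"
    and D_idx: "\<And>x. (\<lambda>m. D (idx m x)) \<longlonglongrightarrow> x"
    by (rule measurable_discretization) blast
  define gm where "gm m p = g (D (idx m (fst p)), D (idx m (snd p)))" for m p
  have "gm m \<in> borel_measurable (M \<Otimes>\<^sub>M M)" for m
  proof -
    note idx_fst = measurable_compose[OF measurable_fst idx_measurable]
      and idx_snd = measurable_compose[OF measurable_snd idx_measurable]
    have "(\<lambda>p. g (D i, D (idx m (snd p)))) \<in> borel_measurable (M \<Otimes>\<^sub>M M)" for i
      by (rule measurable_compose_countable[where f="\<lambda>j p. g (D i, D j)", OF _ idx_snd]) simp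
    then show ?thesis unfolding gm_def
      by (rule measurable_compose_countable[where f="\<lambda>i p. g (D i, D (idx m (snd p)))", OF _ idx_fst])
  qed
  then show ?thesis
  proof (rule borel_measurable_LIMSEQ_metric)
    fix p :: "'a \<times> 'a"
    have "(\<lambda>m. (D (idx m (fst p)), D (idx m (snd p)))) \<longlonglongrightarrow> (fst p, snd p)"
      by (intro tendsto_Pair D_idx)
    moreover have "isCont g p" using g by (cases p) (simp add: continuous_on_eq_continuous_at)
    ultimately show "(\<lambda>m. gm m p) \<longlonglongrightarrow> g p"
      unfolding gm_def using isCont_tendsto_compose[of "(fst p, snd p)" g] by simp
  qed
qed

end

section \<open>Kernels of finite propagation\<close>

definition band_kernel :: "('a::metric_space \<times> 'a \<Rightarrow> complex) \<Rightarrow> real \<Rightarrow> real \<Rightarrow> bool" where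
  "band_kernel k B s \<longleftrightarrow> continuous_on UNIV k \<and> B \<ge> 0 \<and> s > 0 \<and> (\<forall>p. cmod (k p) \<le> B) \<and>
     (\<forall>x y. s < dist x y \<longrightarrow> k (x, y) = 0)"

lemma band_kernelD:
  assumes "band_kernel k B s"
  shows "continuous_on UNIV k" "B \<ge> 0" "s > 0" "\<And>p. cmod (k p) \<le> B"
    "\<And>x y. s < dist x y \<Longrightarrow> k (x, y) = 0"
  using assms unfolding band_kernel_def by auto

lemma good_kernel_imp_band_kernel:
  assumes "good_kernel k"
  obtains B s where "band_kernel k B s"
proof -
  from assms obtain B r where B: "\<And>p. cmod (k p) \<le> B" and r: "\<And>x y. dist x y > r \<Longrightarrow> k (x, y) = 0"
    by (auto simp: good_kernel_def controlled_def bounded_iff)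
  have "continuous_on UNIV k"
    using assms by (auto simp: good_kernel_def intro: uniformly_continuous_imp_continuous)
  with B r have "band_kernel k (max B 0) (max r 1)"
    unfolding band_kernel_def by (auto simp: le_max_iff_disj)
  then show ?thesis by (rule that)
qed

lemma good_kernel_zero: "good_kernel (\<lambda>p. 0)"
  unfolding good_kernel_def controlled_def by (simp add: uniformly_continuous_on_const)

lemma good_kernel_add:
  assumes "good_kernel k1" "good_kernel k2"
  shows "good_kernel (\<lambda>p. k1 p + k2 p)"
  unfolding good_kernel_def
proof (intro conjI)
  obtain a1 a2 where "\<And>p. cmod (k1 p) \<le> a1" "\<And>p. cmod (k2 p) \<le> a2"
    using assms by (auto simp: good_kernel_def bounded_iff)
  then have "\<And>p. cmod (k1 p + k2 p) \<le> a1 + a2"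
    by (metis add_mono norm_triangle_ineq order_trans)
  then show "bounded (range (\<lambda>p. k1 p + k2 p))" unfolding bounded_iff by auto
  show "uniformly_continuous_on UNIV (\<lambda>p. k1 p + k2 p)"
    using assms by (intro uniformly_continuous_on_add) (auto simp: good_kernel_def)
  obtain r1 r2 where "\<And>x y. r1 < dist x y \<Longrightarrow> k1 (x, y) = 0" "\<And>x y. r2 < dist x y \<Longrightarrow> k2 (x, y) = 0"
    using assms by (auto simp: good_kernel_def controlled_def)
  then show "controlled (\<lambda>p. k1 p + k2 p)"
    unfolding controlled_def by (intro exI[of _ "max r1 r2"]) auto
qed

lemma good_kernel_cmult:
  assumes "good_kernel k"
  shows "good_kernel (\<lambda>p. c * k p)"
  unfolding good_kernel_def
proof (intro conjI)
  obtain a where "\<And>p. cmod (k p) \<le> a" using assms by (auto simp: good_kernel_def bounded_iff)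
  then show "bounded (range (\<lambda>p. c * k p))"
    unfolding bounded_iff by (auto intro!: exI[of _ "cmod c * a"] simp: norm_mult mult_left_mono)
  show "uniformly_continuous_on UNIV (\<lambda>p. c * k p)"
    using assms
    by (intro bounded_linear.uniformly_continuous_on[OF bounded_linear_mult_right])
       (auto simp: good_kernel_def)
  obtain r where "\<And>x y. r < dist x y \<Longrightarrow> k (x, y) = 0"
    using assms by (auto simp: good_kernel_def controlled_def)
  then show "controlled (\<lambda>p. c * k p)"
    unfolding controlled_def by (intro exI[of _ r]) auto
qed

lemma op_kernel_cmult_kernel: "op_kernel M (\<lambda>p. c * k p) f x = c * op_kernel M k f x"
  unfolding op_kernel_def by (simp add: mult.assoc)

lemma op_kernel_cmult: "op_kernel M k (\<lambda>y. c * f y) x = c * op_kernel M k f x"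
  unfolding op_kernel_def by (simp add: ac_simps)

context roe_space
begin

lemma borel_measurable_kernel_row:
  assumes "continuous_on UNIV k"
  shows "(\<lambda>y. k (x, y)) \<in> borel_measurable M"
proof (rule continuous_imp_borel_measurable)
  show "continuous_on UNIV (\<lambda>y. k (x, y))"
    by (rule continuous_on_compose2[OF assms]) (auto intro!: continuous_intros)
qed

lemma borel_measurable_kernel_column:
  assumes "continuous_on UNIV k"
  shows "(\<lambda>x. k (x, y)) \<in> borel_measurable M"
proof (rule continuous_imp_borel_measurable)
  show "continuous_on UNIV (\<lambda>x. k (x, y))"
    by (rule continuous_on_compose2[OF assms]) (auto intro!: continuous_intros)
qed

lemma
  fixes h :: "'a \<Rightarrow> 'b::{banach, second_countable_topology}"
  assumes h: "h \<in> borel_measurable M" and bound: "\<And>z. norm (h z) \<le> c * indicator (cball a r) z"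
  shows integrable_bounded_on_cball: "integrable M h"
    and norm_integral_bounded_on_cball: "norm (\<integral>z. h z \<partial>M) \<le> c * measure M (cball a r)"
proof -
  have ind: "integrable M (\<lambda>z. c * indicator (cball a r) z :: real)"
    using emeasure_cball_finite by (intro integrable_mult_right integrable_real_indicator) (auto simp: top.not_eq_extremum)
  show h_int: "integrable M h"
    by (rule Bochner_Integration.integrable_bound[OF ind h])
       (use bound in \<open>auto intro: order_trans[OF _ abs_ge_self]\<close>)
  have "norm (\<integral>z. h z \<partial>M) \<le> (\<integral>z. norm (h z) \<partial>M)" by (rule integral_norm_bound)
  also have "\<dots> \<le> (\<integral>z. c * indicator (cball a r) z \<partial>M)"
    by (rule integral_mono[OF integrable_norm[OF h_int] ind bound])
  finally show "norm (\<integral>z. h z \<partial>M) \<le> c * measure M (cball a r)" by simp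
qed

lemma integrable_bounded_on_cball_L2:
  fixes h :: "'a \<Rightarrow> 'b::{banach, second_countable_topology}"
  assumes f: "f \<in> L2 M" and h: "h \<in> borel_measurable M" and "c \<ge> 0"
    and bound: "\<And>z. norm (h z) \<le> c * indicator (cball a r) z * cmod (f z)"
  shows "integrable M h"
proof (rule Bochner_Integration.integrable_bound[OF _ h])
  show "integrable M (\<lambda>z. c * indicator (cball a r) z + c * (cmod (f z))\<^sup>2 :: real)"
    using emeasure_cball_finite
    by (intro Bochner_Integration.integrable_add integrable_mult_right integrable_real_indicator L2_integrable[OF f])
       (auto simp: top.not_eq_extremum)
  have "t \<le> 1 + t\<^sup>2" if "t \<ge> 0" for t :: real
  proof -
    have "0 \<le> (t - 1)\<^sup>2" by simp
    then have "2 * t \<le> t\<^sup>2 + 1" by (simp add: power2_diff)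
    then show ?thesis using that by linarith
  qed
  then have ind: "indicator (cball a r) z * cmod (f z) \<le> indicator (cball a r) z + (cmod (f z))\<^sup>2" for z
    by (auto simp: indicator_def)
  have "norm (h z) \<le> c * indicator (cball a r) z + c * (cmod (f z))\<^sup>2" for z
  proof -
    have "norm (h z) \<le> c * (indicator (cball a r) z * cmod (f z))"
      using bound[of z] by (simp add: mult.assoc)
    also have "\<dots> \<le> c * (indicator (cball a r) z + (cmod (f z))\<^sup>2)"
      by (rule mult_left_mono[OF ind \<open>c \<ge> 0\<close>])
    finally show ?thesis by (simp add: distrib_left)
  qed
  then show "AE z in M. norm (h z) \<le> norm (c * indicator (cball a r) z + c * (cmod (f z))\<^sup>2)"
    by (intro AE_I2) (auto intro: order_trans[OF _ abs_ge_self])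
qed

lemma norm_kernel_mult_le:
  assumes k: "band_kernel k B s"
  shows "norm (k (x, y) * f y) \<le> B * indicator (cball x s) y * cmod (f y)"
proof (cases "y \<in> cball x s")
  case True
  then show ?thesis using band_kernelD(4)[OF k, of "(x, y)"] by (simp add: norm_mult mult_right_mono)
qed (use band_kernelD(5)[OF k, of x y] in simp)

lemma integrable_kernel_mult:
  assumes k: "band_kernel k B s" and f: "f \<in> L2 M"
  shows "integrable M (\<lambda>y. k (x, y) * f y)"
  using borel_measurable_kernel_row[OF band_kernelD(1)[OF k]] L2_borel_measurable[OF f]
    band_kernelD(2)[OF k] norm_kernel_mult_le[OF k]
  by (intro integrable_bounded_on_cball_L2[OF f]) auto

lemma borel_measurable_op_kernel:
  assumes k: "band_kernel k B s" and f: "f \<in> L2 M"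
  shows "op_kernel M k f \<in> borel_measurable M"
proof -
  have "(\<lambda>p. k p * f (snd p)) \<in> borel_measurable (M \<Otimes>\<^sub>M M)"
    using borel_measurable_pair_continuous[OF band_kernelD(1)[OF k]] L2_borel_measurable[OF f]
    by measurable
  then have "case_prod (\<lambda>x y. k (x, y) * f y) \<in> borel_measurable (M \<Otimes>\<^sub>M M)"
    by (simp add: split_beta')
  then show ?thesis unfolding op_kernel_def
    by (rule sigma_finite_measure.borel_measurable_lebesgue_integral[OF sigma_finite])
qed

lemma op_kernel_add:
  assumes k: "band_kernel k B s" and f: "f \<in> L2 M" and g: "g \<in> L2 M"
  shows "op_kernel M k (\<lambda>y. f y + g y) x = op_kernel M k f x + op_kernel M k g x"
  unfolding op_kernel_def distrib_left
  by (rule Bochner_Integration.integral_add[OF integrable_kernel_mult[OF k f] integrable_kernel_mult[OF k g]])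

lemma op_kernel_diff:
  assumes k: "band_kernel k B s" and f: "f \<in> L2 M" and g: "g \<in> L2 M"
  shows "op_kernel M k (\<lambda>y. f y - g y) x = op_kernel M k f x - op_kernel M k g x"
  unfolding op_kernel_def right_diff_distrib
  by (rule Bochner_Integration.integral_diff[OF integrable_kernel_mult[OF k f] integrable_kernel_mult[OF k g]])

lemma op_kernel_add_kernel:
  assumes k1: "band_kernel k1 B1 s1" and k2: "band_kernel k2 B2 s2" and f: "f \<in> L2 M"
  shows "op_kernel M (\<lambda>p. k1 p + k2 p) f x = op_kernel M k1 f x + op_kernel M k2 f x"
  unfolding op_kernel_def distrib_right
  by (rule Bochner_Integration.integral_add[OF integrable_kernel_mult[OF k1 f] integrable_kernel_mult[OF k2 f]])

lemma op_kernel_cong_AE: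
  assumes k: "band_kernel k B s" and "f \<in> L2 M" "g \<in> L2 M" "AE x in M. f x = g x"
  shows "op_kernel M k f x = op_kernel M k g x"
  unfolding op_kernel_def
  using assms borel_measurable_kernel_row[OF band_kernelD(1)[OF k]]
  by (intro integral_cong_AE) (auto simp: L2_def elim!: eventually_mono)

end

context roe_space
begin

lemma power2_op_kernel_le:
  assumes k: "band_kernel k B s" and f: "f \<in> L2 M"
  shows "(cmod (op_kernel M k f x))\<^sup>2
    \<le> B\<^sup>2 * measure M (cball x s) * (\<integral>y. indicator (cball x s) y * (cmod (f y))\<^sup>2 \<partial>M)"
proof -
  have f_measurable: "(\<lambda>y. cmod (f y)) \<in> borel_measurable M"
    using L2_borel_measurable[OF f] by measurable
  have "cmod (op_kernel M k f x) \<le> (\<integral>y. cmod (k (x, y) * f y) \<partial>M)"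
    unfolding op_kernel_def by (rule integral_norm_bound)
  also have "\<dots> \<le> (\<integral>y. B * (indicator (cball x s) y * cmod (f y)) \<partial>M)"
  proof (rule integral_mono[OF integrable_norm[OF integrable_kernel_mult[OF k f]]])
    show "integrable M (\<lambda>y. B * (indicator (cball x s) y * cmod (f y)))"
      using f_measurable
      by (intro integrable_mult_right integrable_bounded_on_cball_L2[where c=1 and a=x and r=s, OF f])
         auto
  qed (use norm_kernel_mult_le[OF k] in \<open>simp add: mult.assoc\<close>)
  finally have "(cmod (op_kernel M k f x))\<^sup>2 \<le> (B * (\<integral>y. indicator (cball x s) y * cmod (f y) \<partial>M))\<^sup>2"
    by (simp add: power_mono)
  also have "\<dots> \<le> B\<^sup>2 * (measure M (cball x s) * (\<integral>y. indicator (cball x s) y * (cmod (f y))\<^sup>2 \<partial>M))"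
    using power2_integral_indicator_le[of "cball x s" M "\<lambda>y. cmod (f y)"] f_measurable
      L2_integrable[OF f] emeasure_cball_finite
    by (simp add: power_mult_distrib mult_left_mono)
  finally show ?thesis by (simp add: mult.assoc)
qed

lemma borel_measurable_cball_indicator_mult:
  fixes F :: "'a \<Rightarrow> real"
  assumes "F \<in> borel_measurable M"
  shows "(\<lambda>(x, y). indicator (cball x s) y * F y) \<in> borel_measurable (M \<Otimes>\<^sub>M M)"
proof -
  have "(\<lambda>p. dist (fst p) (snd p)) \<in> borel_measurable (M \<Otimes>\<^sub>M M)"
    by (rule borel_measurable_pair_continuous) (intro continuous_intros)
  then have "(\<lambda>p. indicator {..s} (dist (fst p) (snd p)) :: real) \<in> borel_measurable (M \<Otimes>\<^sub>M M)"
    by (rule measurable_compose[OF _ borel_measurable_indicator]) simp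
  then have "(\<lambda>p. indicator {..s} (dist (fst p) (snd p)) * F (snd p)) \<in> borel_measurable (M \<Otimes>\<^sub>M M)"
    by (rule borel_measurable_times[OF _ measurable_compose[OF measurable_snd assms]])
  moreover have "(\<lambda>(x, y). indicator (cball x s) y * F y)
      = (\<lambda>p. indicator {..s} (dist (fst p) (snd p)) * F (snd p))"
    by (auto simp: fun_eq_iff indicator_def)
  ultimately show ?thesis by simp
qed

text \<open>Tonelli: integrating first over \<open>x\<close> turns \<open>1\<^sub>B\<^sub>x\<^sub>(\<^sub>s\<^sub>)(y)\<close> into the measure of \<open>B\<^sub>y(s)\<close>.\<close>
lemma
  fixes F :: "'a \<Rightarrow> real"
  assumes F: "integrable M F" "\<And>y. F y \<ge> 0" and C: "C \<ge> 0" "\<And>x. measure M (cball x s) \<le> C"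
  defines "J x \<equiv> \<integral>y. indicator (cball x s) y * F y \<partial>M"
  shows integrable_cball_integral: "integrable M J"
    and integral_cball_integral_le: "(\<integral>x. J x \<partial>M) \<le> C * (\<integral>y. F y \<partial>M)"
proof -
  have F_measurable: "F \<in> borel_measurable M" using F(1) by simp
  note integrand_measurable = borel_measurable_cball_indicator_mult[OF F_measurable, of s]
  have J_nonneg: "J x \<ge> 0" for x
    unfolding J_def using F(2) by (intro integral_nonneg_AE) auto
  have J_measurable: "J \<in> borel_measurable M"
    unfolding J_def
    by (rule sigma_finite_measure.borel_measurable_lebesgue_integral[OF sigma_finite integrand_measurable])
  have "(\<integral>\<^sup>+x. ennreal (J x) \<partial>M) = (\<integral>\<^sup>+x. (\<integral>\<^sup>+y. ennreal (indicator (cball x s) y * F y) \<partial>M) \<partial>M)"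
  proof (rule nn_integral_cong)
    fix x
    have "integrable M (\<lambda>y. indicator (cball x s) y * F y)"
      using integrable_real_mult_indicator[OF _ F(1), of "cball x s"] by (simp add: mult.commute)
    then show "ennreal (J x) = (\<integral>\<^sup>+y. ennreal (indicator (cball x s) y * F y) \<partial>M)"
      unfolding J_def using F(2) by (intro nn_integral_eq_integral[symmetric]) auto
  qed
  also have "\<dots> = (\<integral>\<^sup>+y. (\<integral>\<^sup>+x. ennreal (indicator (cball x s) y * F y) \<partial>M) \<partial>M)"
    using measurable_compose[OF integrand_measurable measurable_ennreal]
    by (intro pair_sigma_finite.Fubini'[OF pair_sigma_finite, symmetric]) (simp add: split_beta')
  also have "\<dots> = (\<integral>\<^sup>+y. ennreal (F y) * emeasure M (cball y s) \<partial>M)"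
  proof (rule nn_integral_cong)
    fix y
    have "(\<lambda>x. ennreal (indicator (cball x s) y * F y)) = (\<lambda>x. ennreal (F y) * indicator (cball y s) x)"
      by (auto simp: fun_eq_iff indicator_def dist_commute)
    then show "(\<integral>\<^sup>+x. ennreal (indicator (cball x s) y * F y) \<partial>M) = ennreal (F y) * emeasure M (cball y s)"
      by (simp add: nn_integral_cmult_indicator)
  qed
  also have "\<dots> \<le> (\<integral>\<^sup>+y. ennreal (F y) * ennreal C \<partial>M)"
    using C(2) by (intro nn_integral_mono mult_left_mono) (auto simp: emeasure_cball ennreal_leI)
  also have "\<dots> = (\<integral>\<^sup>+y. ennreal (F y) \<partial>M) * ennreal C"
    using F_measurable by (intro nn_integral_multc) simp
  also have "\<dots> = ennreal (C * (\<integral>y. F y \<partial>M))"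
    using F C(1) by (simp add: nn_integral_eq_integral ennreal_mult integral_nonneg_AE mult.commute)
  finally have nn_J: "(\<integral>\<^sup>+x. ennreal (J x) \<partial>M) \<le> ennreal (C * (\<integral>y. F y \<partial>M))" .
  show J_integrable: "integrable M J"
    by (rule integrableI_nonneg[OF J_measurable]) (use J_nonneg nn_J in \<open>auto intro: le_less_trans\<close>)
  have "ennreal (\<integral>x. J x \<partial>M) \<le> ennreal (C * (\<integral>y. F y \<partial>M))"
    using nn_J nn_integral_eq_integral[OF J_integrable] J_nonneg by simp
  then show "(\<integral>x. J x \<partial>M) \<le> C * (\<integral>y. F y \<partial>M)"
    using F C(1) by (subst (asm) ennreal_le_iff) (auto intro: integral_nonneg_AE)
qed

text \<open>Schur's test for a kernel of propagation \<open>s\<close>: both the row and the column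
  integrals of \<open>|k|\<close> are bounded by \<open>B\<close> times the measure of an \<open>s\<close>-ball.\<close>
lemma
  assumes k: "band_kernel k B s" and f: "f \<in> L2 M"
    and C: "C \<ge> 0" "\<And>x. measure M (cball x s) \<le> C"
  shows L2_op_kernel: "op_kernel M k f \<in> L2 M"
    and l2norm_op_kernel_le: "l2norm M (op_kernel M k f) \<le> B * C * l2norm M f"
proof -
  define J where "J x = (\<integral>y. indicator (cball x s) y * (cmod (f y))\<^sup>2 \<partial>M)" for x
  have J_nonneg: "J x \<ge> 0" for x unfolding J_def by (intro integral_nonneg_AE) auto
  have pointwise: "(cmod (op_kernel M k f x))\<^sup>2 \<le> B\<^sup>2 * C * J x" for x
  proof -
    have "(cmod (op_kernel M k f x))\<^sup>2 \<le> B\<^sup>2 * (measure M (cball x s) * J x)"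
      using power2_op_kernel_le[OF k f, of x] by (simp add: J_def mult.assoc)
    also have "\<dots> \<le> B\<^sup>2 * (C * J x)"
      by (intro mult_left_mono mult_right_mono C(2) J_nonneg) simp
    finally show ?thesis by (simp add: mult.assoc)
  qed
  have J_integrable: "integrable M J"
    unfolding J_def by (rule integrable_cball_integral[OF L2_integrable[OF f] _ C]) simp
  have Kf_integrable: "integrable M (\<lambda>x. (cmod (op_kernel M k f x))\<^sup>2)"
  proof (rule Bochner_Integration.integrable_bound[of M "\<lambda>x. B\<^sup>2 * C * J x"])
    show "integrable M (\<lambda>x. B\<^sup>2 * C * J x)" using J_integrable by simp
    show "(\<lambda>x. (cmod (op_kernel M k f x))\<^sup>2) \<in> borel_measurable M"
      using borel_measurable_op_kernel[OF k f] by measurable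
    show "AE x in M. norm ((cmod (op_kernel M k f x))\<^sup>2) \<le> norm (B\<^sup>2 * C * J x)"
      using pointwise by (intro AE_I2) (auto intro: order_trans[OF _ abs_ge_self])
  qed
  then show "op_kernel M k f \<in> L2 M"
    by (rule L2I[OF borel_measurable_op_kernel[OF k f]])
  have "(l2norm M (op_kernel M k f))\<^sup>2 = (\<integral>x. (cmod (op_kernel M k f x))\<^sup>2 \<partial>M)"
    by (rule l2norm_power2)
  also have "\<dots> \<le> (\<integral>x. B\<^sup>2 * C * J x \<partial>M)"
    by (rule integral_mono[OF Kf_integrable]) (use J_integrable pointwise in auto)
  also have "\<dots> = B\<^sup>2 * C * (\<integral>x. J x \<partial>M)" by simp
  also have "\<dots> \<le> B\<^sup>2 * C * (C * (l2norm M f)\<^sup>2)"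
    using integral_cball_integral_le[OF L2_integrable[OF f] _ C] C(1)
    by (intro mult_left_mono) (auto simp: J_def l2norm_power2)
  also have "\<dots> = (B * C * l2norm M f)\<^sup>2" by (simp add: power_mult_distrib power2_eq_square)
  finally have "(l2norm M (op_kernel M k f))\<^sup>2 \<le> (B * C * l2norm M f)\<^sup>2" .
  moreover have "0 \<le> B * C * l2norm M f"
    using band_kernelD(2)[OF k] C(1) l2norm_nonneg[of M f] by simp
  ultimately show "l2norm M (op_kernel M k f) \<le> B * C * l2norm M f"
    by (rule power2_le_imp_le)
qed

lemma bounded_op_kernel:
  assumes k: "band_kernel k B s"
  shows "bounded_op M (op_kernel M k)"
proof -
  obtain C where C: "C \<ge> 0" "\<And>x. measure M (cball x s) \<le> C"
    using measure_cball_bounded by blast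
  show ?thesis
  proof (rule bounded_opI[where C="B * C"])
    fix f assume f: "f \<in> L2 M"
    show "op_kernel M k f \<in> L2 M" by (rule L2_op_kernel[OF k f C])
    show "l2norm M (op_kernel M k f) \<le> B * C * l2norm M f" by (rule l2norm_op_kernel_le[OF k f C])
    fix c show "AE x in M. op_kernel M k (\<lambda>y. c * f y) x = c * op_kernel M k f x"
      by (simp add: op_kernel_cmult)
  next
    fix f g assume f: "f \<in> L2 M" and g: "g \<in> L2 M"
    show "AE x in M. op_kernel M k (\<lambda>y. f y + g y) x = op_kernel M k f x + op_kernel M k g x"
      by (simp add: op_kernel_add[OF k f g])
    assume "AE x in M. f x = g x"
    then show "AE x in M. op_kernel M k f x = op_kernel M k g x"
      by (simp add: op_kernel_cong_AE[OF k f g])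
  qed
qed

lemma bounded_op_kernel_good: "good_kernel k \<Longrightarrow> bounded_op M (op_kernel M k)"
  by (metis good_kernel_imp_band_kernel bounded_op_kernel)

end

section \<open>Composition of kernels\<close>

definition kernel_comp ::
  "'a measure \<Rightarrow> ('a \<times> 'a \<Rightarrow> complex) \<Rightarrow> ('a \<times> 'a \<Rightarrow> complex) \<Rightarrow> ('a \<times> 'a \<Rightarrow> complex)" where
  "kernel_comp M k1 k2 = (\<lambda>(x, y). \<integral>z. k1 (x, z) * k2 (z, y) \<partial>M)"

context roe_space
begin

lemma borel_measurable_kernel_comp_integrand:
  assumes "band_kernel k1 B1 s1" "band_kernel k2 B2 s2"
  shows "(\<lambda>z. k1 (x, z) * k2 (z, y)) \<in> borel_measurable M"
  using borel_measurable_kernel_row[OF band_kernelD(1)[OF assms(1)]]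
    borel_measurable_kernel_column[OF band_kernelD(1)[OF assms(2)]]
  by (rule borel_measurable_times)

lemma
  assumes k1: "band_kernel k1 B1 s1" and k2: "band_kernel k2 B2 s2"
  shows integrable_kernel_comp_integrand: "integrable M (\<lambda>z. k1 (x, z) * k2 (z, y))"
    and norm_kernel_comp_le: "cmod (kernel_comp M k1 k2 (x, y)) \<le> B1 * B2 * measure M (cball x s1)"
proof -
  have bound: "norm (k1 (x, z) * k2 (z, y)) \<le> B1 * B2 * indicator (cball x s1) z" for z
  proof (cases "z \<in> cball x s1")
    case True
    then show ?thesis
      using band_kernelD(4)[OF k1, of "(x, z)"] band_kernelD(4)[OF k2, of "(z, y)"] band_kernelD(2)[OF k1]
      by (simp add: norm_mult mult_mono)
  qed (use band_kernelD(5)[OF k1, of x z] in simp)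
  show "integrable M (\<lambda>z. k1 (x, z) * k2 (z, y))"
    by (rule integrable_bounded_on_cball[OF borel_measurable_kernel_comp_integrand[OF k1 k2] bound])
  show "cmod (kernel_comp M k1 k2 (x, y)) \<le> B1 * B2 * measure M (cball x s1)"
    using norm_integral_bounded_on_cball[OF borel_measurable_kernel_comp_integrand[OF k1 k2] bound]
    by (simp add: kernel_comp_def)
qed

lemma kernel_comp_eq_0:
  assumes k1: "band_kernel k1 B1 s1" and k2: "band_kernel k2 B2 s2" and "s1 + s2 < dist x y"
  shows "kernel_comp M k1 k2 (x, y) = 0"
proof -
  have "k1 (x, z) * k2 (z, y) = 0" for z
  proof (cases "dist x z \<le> s1")
    case True
    then have "s2 < dist z y" using \<open>s1 + s2 < dist x y\<close> dist_triangle[of x y z] by linarith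
    then show ?thesis using band_kernelD(5)[OF k2] by simp
  qed (use band_kernelD(5)[OF k1] in simp)
  then have "(\<lambda>z. k1 (x, z) * k2 (z, y)) = (\<lambda>z. 0)" by (simp add: fun_eq_iff)
  then show ?thesis by (simp add: kernel_comp_def)
qed

lemma norm_kernel_comp_diff_fst_le:
  assumes k1: "band_kernel k1 B1 s1" and k2: "band_kernel k2 B2 s2"
    and C2: "\<And>x. measure M (cball x s2) \<le> C2" and "\<eta> \<ge> 0"
    and close: "\<And>z. cmod (k1 (x', z) - k1 (x, z)) \<le> \<eta>"
  shows "cmod (kernel_comp M k1 k2 (x', y) - kernel_comp M k1 k2 (x, y)) \<le> \<eta> * B2 * C2"
proof -
  have measurable: "(\<lambda>z. (k1 (x', z) - k1 (x, z)) * k2 (z, y)) \<in> borel_measurable M"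
    using borel_measurable_kernel_row[OF band_kernelD(1)[OF k1]]
      borel_measurable_kernel_column[OF band_kernelD(1)[OF k2]]
    by (intro borel_measurable_times borel_measurable_diff)
  have bound: "norm ((k1 (x', z) - k1 (x, z)) * k2 (z, y)) \<le> \<eta> * B2 * indicator (cball y s2) z" for z
  proof (cases "z \<in> cball y s2")
    case True
    then show ?thesis using close[of z] band_kernelD(4)[OF k2, of "(z, y)"] band_kernelD(2)[OF k2] \<open>\<eta> \<ge> 0\<close>
      by (simp add: norm_mult mult_mono)
  qed (use band_kernelD(5)[OF k2, of z y] in \<open>simp add: dist_commute\<close>)
  have "kernel_comp M k1 k2 (x', y) - kernel_comp M k1 k2 (x, y)
      = (\<integral>z. (k1 (x', z) - k1 (x, z)) * k2 (z, y) \<partial>M)"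
    unfolding kernel_comp_def using integrable_kernel_comp_integrand[OF k1 k2]
    by (simp add: left_diff_distrib Bochner_Integration.integral_diff)
  also have "cmod \<dots> \<le> \<eta> * B2 * C2"
    using order_trans[OF norm_integral_bounded_on_cball[OF measurable bound] mult_left_mono[OF C2[of y]]]
      \<open>\<eta> \<ge> 0\<close> band_kernelD(2)[OF k2]
    by simp
  finally show ?thesis .
qed

lemma norm_kernel_comp_diff_snd_le:
  assumes k1: "band_kernel k1 B1 s1" and k2: "band_kernel k2 B2 s2"
    and C1: "\<And>x. measure M (cball x s1) \<le> C1" and "\<eta> \<ge> 0"
    and close: "\<And>z. cmod (k2 (z, y') - k2 (z, y)) \<le> \<eta>"
  shows "cmod (kernel_comp M k1 k2 (x, y') - kernel_comp M k1 k2 (x, y)) \<le> B1 * \<eta> * C1"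
proof -
  have measurable: "(\<lambda>z. k1 (x, z) * (k2 (z, y') - k2 (z, y))) \<in> borel_measurable M"
    using borel_measurable_kernel_row[OF band_kernelD(1)[OF k1]]
      borel_measurable_kernel_column[OF band_kernelD(1)[OF k2]]
    by (intro borel_measurable_times borel_measurable_diff)
  have bound: "norm (k1 (x, z) * (k2 (z, y') - k2 (z, y))) \<le> B1 * \<eta> * indicator (cball x s1) z" for z
  proof (cases "z \<in> cball x s1")
    case True
    then show ?thesis using close[of z] band_kernelD(4)[OF k1, of "(x, z)"] band_kernelD(2)[OF k1] \<open>\<eta> \<ge> 0\<close>
      by (simp add: norm_mult mult_mono)
  qed (use band_kernelD(5)[OF k1, of x z] in simp)
  have "kernel_comp M k1 k2 (x, y') - kernel_comp M k1 k2 (x, y)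
      = (\<integral>z. k1 (x, z) * (k2 (z, y') - k2 (z, y)) \<partial>M)"
    unfolding kernel_comp_def using integrable_kernel_comp_integrand[OF k1 k2]
    by (simp add: right_diff_distrib Bochner_Integration.integral_diff)
  also have "cmod \<dots> \<le> B1 * \<eta> * C1"
    using order_trans[OF norm_integral_bounded_on_cball[OF measurable bound] mult_left_mono[OF C1[of x]]]
      \<open>\<eta> \<ge> 0\<close> band_kernelD(2)[OF k1]
    by simp
  finally show ?thesis .
qed

lemma uniformly_continuous_kernel_comp:
  assumes k1: "band_kernel k1 B1 s1" and k2: "band_kernel k2 B2 s2"
    and u1: "uniformly_continuous_on UNIV k1" and u2: "uniformly_continuous_on UNIV k2"
  shows "uniformly_continuous_on UNIV (kernel_comp M k1 k2)"
  unfolding uniformly_continuous_on_def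
proof (intro allI impI)
  fix e :: real assume "e > 0"
  obtain C1 where C1: "C1 \<ge> 0" "\<And>x. measure M (cball x s1) \<le> C1"
    using measure_cball_bounded by blast
  obtain C2 where C2: "C2 \<ge> 0" "\<And>x. measure M (cball x s2) \<le> C2"
    using measure_cball_bounded by blast
  define K where "K = B2 * C2 + B1 * C1 + 1"
  have "K > 0" using band_kernelD(2)[OF k1] band_kernelD(2)[OF k2] C1 C2 by (simp add: K_def add_nonneg_pos)
  define \<eta> where "\<eta> = e / (2 * K)"
  have "\<eta> > 0" using \<open>e > 0\<close> \<open>K > 0\<close> by (simp add: \<eta>_def)
  obtain d1 where d1: "d1 > 0" "\<And>p p'. dist p' p < d1 \<Longrightarrow> dist (k1 p') (k1 p) < \<eta>"
    using u1[unfolded uniformly_continuous_on_def, rule_format, OF \<open>\<eta> > 0\<close>] by auto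
  obtain d2 where d2: "d2 > 0" "\<And>p p'. dist p' p < d2 \<Longrightarrow> dist (k2 p') (k2 p) < \<eta>"
    using u2[unfolded uniformly_continuous_on_def, rule_format, OF \<open>\<eta> > 0\<close>] by auto
  show "\<exists>d>0. \<forall>p\<in>UNIV. \<forall>p'\<in>UNIV. dist p' p < d \<longrightarrow> dist (kernel_comp M k1 k2 p') (kernel_comp M k1 k2 p) < e"
  proof (intro exI[of _ "min d1 d2"] conjI ballI impI)
    fix p p' :: "'a \<times> 'a" assume dp: "dist p' p < min d1 d2"
    obtain x y where p: "p = (x, y)" by (cases p)
    obtain x' y' where p': "p' = (x', y')" by (cases p')
    have "dist x' x < d1" "dist y' y < d2"
      using dp dist_fst_le[of p' p] dist_snd_le[of p' p] by (auto simp: p p')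
    then have "dist (x', z) (x, z) < d1" "dist (z, y') (z, y) < d2" for z
      by (simp_all add: dist_Pair_Pair)
    then have "dist (k1 (x', z)) (k1 (x, z)) < \<eta>" "dist (k2 (z, y')) (k2 (z, y)) < \<eta>" for z
      using d1(2) d2(2) by blast+
    then have "cmod (k1 (x', z) - k1 (x, z)) \<le> \<eta>" "cmod (k2 (z, y') - k2 (z, y)) \<le> \<eta>" for z
      by (simp_all add: dist_norm less_imp_le)
    then have "cmod (kernel_comp M k1 k2 (x', y') - kernel_comp M k1 k2 (x, y')) \<le> \<eta> * B2 * C2"
      and "cmod (kernel_comp M k1 k2 (x, y') - kernel_comp M k1 k2 (x, y)) \<le> B1 * \<eta> * C1"
      using \<open>\<eta> > 0\<close> by (auto intro: norm_kernel_comp_diff_fst_le[OF k1 k2 C2(2)]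
          norm_kernel_comp_diff_snd_le[OF k1 k2 C1(2)])
    then have "dist (kernel_comp M k1 k2 p') (kernel_comp M k1 k2 p) \<le> \<eta> * (B2 * C2 + B1 * C1)"
      unfolding p p' dist_norm using norm_diff_triangle_le by (fastforce simp: algebra_simps)
    also have "\<dots> < \<eta> * (2 * K)"
      using \<open>\<eta> > 0\<close> \<open>K > 0\<close> by (intro mult_strict_left_mono) (auto simp: K_def)
    also have "\<dots> = e" using \<open>K > 0\<close> by (simp add: \<eta>_def)
    finally show "dist (kernel_comp M k1 k2 p') (kernel_comp M k1 k2 p) < e" .
  qed (use d1 d2 in simp)
qed

lemma good_kernel_comp:
  assumes "good_kernel k1" "good_kernel k2"
  shows "good_kernel (kernel_comp M k1 k2)"
proof -
  obtain B1 s1 B2 s2 where k1: "band_kernel k1 B1 s1" and k2: "band_kernel k2 B2 s2"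
    using assms by (meson good_kernel_imp_band_kernel)
  obtain C where C: "C \<ge> 0" "\<And>x. measure M (cball x s1) \<le> C"
    using measure_cball_bounded by blast
  have "cmod (kernel_comp M k1 k2 p) \<le> B1 * B2 * C" for p
    using norm_kernel_comp_le[OF k1 k2, of "fst p" "snd p"] C(2)[of "fst p"]
      band_kernelD(2)[OF k1] band_kernelD(2)[OF k2]
    by (smt (verit) mult_left_mono mult_nonneg_nonneg prod.collapse)
  then have "bounded (range (kernel_comp M k1 k2))"
    unfolding bounded_iff by blast
  moreover have "uniformly_continuous_on UNIV (kernel_comp M k1 k2)"
    using assms by (intro uniformly_continuous_kernel_comp[OF k1 k2]) (auto simp: good_kernel_def)
  moreover have "controlled (kernel_comp M k1 k2)"
    unfolding controlled_def using kernel_comp_eq_0[OF k1 k2] by blast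
  ultimately show ?thesis by (simp add: good_kernel_def)
qed

lemma integrable_pair_mult:
  fixes g1 g2 :: "'a \<Rightarrow> real"
  assumes i1: "integrable M g1" and i2: "integrable M g2" and "\<And>x. g1 x \<ge> 0" "\<And>x. g2 x \<ge> 0"
  shows "integrable (M \<Otimes>\<^sub>M M) (\<lambda>p. g1 (fst p) * g2 (snd p))"
proof -
  interpret sigma_finite_measure M by (rule sigma_finite)
  have m1: "g1 \<in> borel_measurable M" and m2: "g2 \<in> borel_measurable M" using i1 i2 by auto
  have m: "(\<lambda>p. g1 (fst p) * g2 (snd p)) \<in> borel_measurable (M \<Otimes>\<^sub>M M)"
    by (intro borel_measurable_times measurable_compose[OF measurable_fst m1] measurable_compose[OF measurable_snd m2])
  have "(\<integral>\<^sup>+p. ennreal (g1 (fst p) * g2 (snd p)) \<partial>(M \<Otimes>\<^sub>M M))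
      = (\<integral>\<^sup>+x. (\<integral>\<^sup>+y. ennreal (g1 (fst (x, y)) * g2 (snd (x, y))) \<partial>M) \<partial>M)"
    by (rule nn_integral_fst[symmetric]) (rule measurable_compose[OF m measurable_ennreal])
  also have "\<dots> = (\<integral>\<^sup>+x. ennreal (g1 x) \<partial>M) * (\<integral>\<^sup>+y. ennreal (g2 y) \<partial>M)"
    using assms m1 m2 by (simp add: ennreal_mult nn_integral_cmult nn_integral_multc)
  also have "\<dots> = ennreal (integral\<^sup>L M g1) * ennreal (integral\<^sup>L M g2)"
    using assms by (simp add: nn_integral_eq_integral)
  also have "\<dots> < \<infinity>" by (simp add: ennreal_mult_less_top)
  finally show ?thesis
    by (intro integrableI_nonneg[OF m]) (use assms in auto)
qed

text \<open>The dominating function is \<open>B\<^sub>1 B\<^sub>2 1\<^sub>B\<^sub>x\<^sub>(\<^sub>s\<^sub>1\<^sub>)(z) 1\<^sub>B\<^sub>x\<^sub>(\<^sub>s\<^sub>1\<^sub>+\<^sub>s\<^sub>2\<^sub>)(y) |f(y)|\<close>.\<close>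
lemma integrable_kernel_comp_op_integrand:
  assumes k1: "band_kernel k1 B1 s1" and k2: "band_kernel k2 B2 s2" and f: "f \<in> L2 M"
  shows "integrable (M \<Otimes>\<^sub>M M) (\<lambda>(z, y). k1 (x, z) * k2 (z, y) * f y)"
proof -
  define g1 where "g1 z = B1 * B2 * indicator (cball x s1) z" for z :: 'a
  define g2 where "g2 y = indicator (cball x (s1 + s2)) y * cmod (f y)" for y :: 'a
  have B1: "B1 \<ge> 0" and B2: "B2 \<ge> 0" using band_kernelD(2)[OF k1] band_kernelD(2)[OF k2] by auto
  have g1_integrable: "integrable M g1" unfolding g1_def using emeasure_cball_finite
    by (intro integrable_mult_right integrable_real_indicator) (auto simp: top.not_eq_extremum)
  have "g2 \<in> borel_measurable M"
    unfolding g2_def using L2_borel_measurable[OF f] by measurable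
  then have g2_integrable: "integrable M g2"
    by (rule integrable_bounded_on_cball_L2[OF f, where c=1 and a=x and r="s1+s2"]) (auto simp: g2_def)
  have dominating: "integrable (M \<Otimes>\<^sub>M M) (\<lambda>p. g1 (fst p) * g2 (snd p))"
    using B1 B2 by (intro integrable_pair_mult[OF g1_integrable g2_integrable]) (auto simp: g1_def g2_def)
  have measurable: "(\<lambda>(z, y). k1 (x, z) * k2 (z, y) * f y) \<in> borel_measurable (M \<Otimes>\<^sub>M M)"
    using measurable_compose[OF measurable_fst borel_measurable_kernel_row[OF band_kernelD(1)[OF k1]]]
      borel_measurable_pair_continuous[OF band_kernelD(1)[OF k2]]
      measurable_compose[OF measurable_snd L2_borel_measurable[OF f]]
    unfolding split_beta' by (intro borel_measurable_times) simp_all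
  have bound: "norm (k1 (x, z) * k2 (z, y) * f y) \<le> norm (g1 z * g2 y)" for z y
  proof (cases "z \<in> cball x s1 \<and> y \<in> cball x (s1 + s2)")
    case True
    have "norm (k1 (x, z) * k2 (z, y) * f y) = cmod (k1 (x, z)) * cmod (k2 (z, y)) * cmod (f y)"
      by (simp add: norm_mult)
    also have "\<dots> \<le> B1 * B2 * cmod (f y)"
      using band_kernelD(4)[OF k1, of "(x, z)"] band_kernelD(4)[OF k2, of "(z, y)"] B1
      by (intro mult_right_mono mult_mono) auto
    finally show ?thesis using True by (simp add: g1_def g2_def)
  next
    case False
    then have "s1 < dist x z \<or> s2 < dist z y" using dist_triangle[of x y z] by auto
    then show ?thesis using band_kernelD(5)[OF k1, of x z] band_kernelD(5)[OF k2, of z y] by auto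
  qed
  show ?thesis
    by (rule Bochner_Integration.integrable_bound[OF dominating measurable])
       (use bound in \<open>auto intro: AE_I2\<close>)
qed

lemma op_kernel_comp:
  assumes k1: "band_kernel k1 B1 s1" and k2: "band_kernel k2 B2 s2" and f: "f \<in> L2 M"
  shows "op_kernel M k1 (op_kernel M k2 f) x = op_kernel M (kernel_comp M k1 k2) f x"
proof -
  have "op_kernel M k1 (op_kernel M k2 f) x = (\<integral>z. (\<integral>y. k1 (x, z) * k2 (z, y) * f y \<partial>M) \<partial>M)"
    unfolding op_kernel_def by (simp add: mult.assoc)
  also have "\<dots> = (\<integral>y. (\<integral>z. k1 (x, z) * k2 (z, y) * f y \<partial>M) \<partial>M)"
    using integrable_kernel_comp_op_integrand[OF k1 k2 f]
    by (intro pair_sigma_finite.Fubini_integral[OF pair_sigma_finite, symmetric])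
  also have "\<dots> = op_kernel M (kernel_comp M k1 k2) f x"
    unfolding op_kernel_def kernel_comp_def by simp
  finally show ?thesis .
qed

end

section \<open>\<open>E(X)\<close> is an algebra\<close>

lemma roe_bounded_op: "T \<in> roe M \<Longrightarrow> bounded_op M T"
  by (simp add: roe_def)

lemma roe_approx:
  "T \<in> roe M \<Longrightarrow> \<epsilon> > 0 \<Longrightarrow> \<exists>k. good_kernel k \<and> opnorm M (op_diff T (op_kernel M k)) < \<epsilon>"
  by (simp add: roe_def)

context roe_space
begin

lemma roe_zero: "op_zero \<in> roe M"
  unfolding roe_def
proof (intro CollectI conjI allI impI exI[of _ "\<lambda>p. 0"] bounded_op_zero good_kernel_zero)
  fix e :: real assume "e > 0"
  have "op_diff op_zero (op_kernel M (\<lambda>p. 0)) = op_zero"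
    by (simp add: op_diff_def op_zero_def op_kernel_def fun_eq_iff)
  then show "opnorm M (op_diff op_zero (op_kernel M (\<lambda>p. 0))) < e"
    using \<open>e > 0\<close> by (simp add: opnorm_zero)
qed

lemma roe_add:
  assumes S: "S \<in> roe M" and T: "T \<in> roe M"
  shows "op_add S T \<in> roe M"
  unfolding roe_def
proof (intro CollectI conjI allI impI)
  show "bounded_op M (op_add S T)" by (intro bounded_op_add roe_bounded_op S T)
  fix e :: real assume "e > 0"
  obtain k1 where k1: "good_kernel k1" "opnorm M (op_diff S (op_kernel M k1)) < e / 2"
    using roe_approx[OF S, of "e/2"] \<open>e > 0\<close> by auto
  obtain k2 where k2: "good_kernel k2" "opnorm M (op_diff T (op_kernel M k2)) < e / 2"
    using roe_approx[OF T, of "e/2"] \<open>e > 0\<close> by auto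
  obtain B1 s1 B2 s2 where b1: "band_kernel k1 B1 s1" and b2: "band_kernel k2 B2 s2"
    using k1(1) k2(1) by (meson good_kernel_imp_band_kernel)
  have "opnorm M (op_diff (op_add S T) (op_kernel M (\<lambda>p. k1 p + k2 p)))
     = opnorm M (op_add (op_diff S (op_kernel M k1)) (op_diff T (op_kernel M k2)))"
    by (rule opnorm_cong) (auto simp: op_diff_def op_add_def fun_eq_iff op_kernel_add_kernel[OF b1 b2])
  also have "\<dots> \<le> opnorm M (op_diff S (op_kernel M k1)) + opnorm M (op_diff T (op_kernel M k2))"
    by (intro opnorm_add_le bounded_op_diff roe_bounded_op S T bounded_op_kernel_good k1(1) k2(1))
  also have "\<dots> < e" using k1(2) k2(2) by simp
  finally show "\<exists>k. good_kernel k \<and> opnorm M (op_diff (op_add S T) (op_kernel M k)) < e"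
    using good_kernel_add[OF k1(1) k2(1)] by blast
qed

lemma roe_scale:
  assumes T: "T \<in> roe M"
  shows "op_scale c T \<in> roe M"
  unfolding roe_def
proof (intro CollectI conjI allI impI)
  show "bounded_op M (op_scale c T)" by (intro bounded_op_scale roe_bounded_op T)
  fix e :: real assume "e > 0"
  then obtain k where k: "good_kernel k" "opnorm M (op_diff T (op_kernel M k)) < e / (cmod c + 1)"
    using roe_approx[OF T, of "e / (cmod c + 1)"] by (auto simp: add_nonneg_pos)
  have "opnorm M (op_diff (op_scale c T) (op_kernel M (\<lambda>p. c * k p)))
     = opnorm M (op_scale c (op_diff T (op_kernel M k)))"
    by (rule opnorm_cong) (auto simp: op_diff_def op_scale_def fun_eq_iff op_kernel_cmult_kernel algebra_simps)
  also have "\<dots> \<le> cmod c * opnorm M (op_diff T (op_kernel M k))"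
    by (intro opnorm_scale_le bounded_op_diff roe_bounded_op T bounded_op_kernel_good k(1))
  also have "\<dots> \<le> cmod c * (e / (cmod c + 1))"
    using k(2) by (intro mult_left_mono) auto
  also have "\<dots> = e * (cmod c / (cmod c + 1))" by simp
  also have "\<dots> < e"
  proof -
    have "cmod c / (cmod c + 1) < 1"
      using norm_ge_zero[of c] unfolding divide_less_eq_1 by linarith
    then show ?thesis using mult_strict_left_mono[OF _ \<open>e > 0\<close>] by fastforce
  qed
  finally show "\<exists>k. good_kernel k \<and> opnorm M (op_diff (op_scale c T) (op_kernel M k)) < e"
    using good_kernel_cmult[OF k(1)] by blast
qed

lemma opnorm_kernel_le_approx:
  assumes A: "bounded_op M A" and k: "good_kernel k"
  shows "opnorm M (op_kernel M k) \<le> opnorm M A + opnorm M (op_diff A (op_kernel M k))"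
proof -
  have "opnorm M (op_kernel M k) = opnorm M (op_diff A (op_diff A (op_kernel M k)))"
    by (rule opnorm_cong) (simp add: op_diff_def fun_eq_iff)
  also have "\<dots> \<le> opnorm M A + opnorm M (op_diff A (op_kernel M k))"
    by (intro opnorm_diff_le A bounded_op_diff bounded_op_kernel_good k)
  finally show ?thesis .
qed

text \<open>\<open>AT - K\<^sub>1K\<^sub>2 = (A - K\<^sub>1)T + K\<^sub>1(T - K\<^sub>2)\<close>.\<close>
lemma opnorm_comp_diff_kernel_comp_le:
  assumes A: "bounded_op M A" and T: "bounded_op M T"
    and k1: "good_kernel k1" "band_kernel k1 B1 s1" and k2: "good_kernel k2" "band_kernel k2 B2 s2"
  shows "opnorm M (op_diff (A \<circ> T) (op_kernel M (kernel_comp M k1 k2)))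
    \<le> opnorm M (op_diff A (op_kernel M k1)) * opnorm M T
      + opnorm M (op_kernel M k1) * opnorm M (op_diff T (op_kernel M k2))"
proof -
  note K1 = bounded_op_kernel_good[OF k1(1)] and K2 = bounded_op_kernel_good[OF k2(1)]
  have "opnorm M (op_diff (A \<circ> T) (op_kernel M (kernel_comp M k1 k2)))
    = opnorm M (op_add (op_diff A (op_kernel M k1) \<circ> T) (op_kernel M k1 \<circ> op_diff T (op_kernel M k2)))"
  proof (rule opnorm_cong)
    fix f assume f: "f \<in> L2 M"
    show "op_diff (A \<circ> T) (op_kernel M (kernel_comp M k1 k2)) f
        = op_add (op_diff A (op_kernel M k1) \<circ> T) (op_kernel M k1 \<circ> op_diff T (op_kernel M k2)) f"
      unfolding op_diff_def op_add_def
      using op_kernel_comp[OF k1(2) k2(2) f]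
        op_kernel_diff[OF k1(2) bounded_opD(1)[OF T f] bounded_opD(1)[OF K2 f]]
      by (simp add: fun_eq_iff)
  qed
  also have "\<dots> \<le> opnorm M (op_diff A (op_kernel M k1) \<circ> T) + opnorm M (op_kernel M k1 \<circ> op_diff T (op_kernel M k2))"
    by (intro opnorm_add_le bounded_op_comp bounded_op_diff A T K1 K2)
  also have "\<dots> \<le> opnorm M (op_diff A (op_kernel M k1)) * opnorm M T
      + opnorm M (op_kernel M k1) * opnorm M (op_diff T (op_kernel M k2))"
    by (intro add_mono opnorm_comp_le bounded_op_diff A T K1 K2)
  finally show ?thesis .
qed

lemma roe_comp:
  assumes A: "A \<in> roe M" and T: "T \<in> roe M"
  shows "A \<circ> T \<in> roe M"
  unfolding roe_def
proof (intro CollectI conjI allI impI)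
  have Ab: "bounded_op M A" and Tb: "bounded_op M T" using roe_bounded_op A T by auto
  show "bounded_op M (A \<circ> T)" by (intro bounded_op_comp Ab Tb)
  fix e :: real assume "e > 0"
  define a t where "a = opnorm M A" and "t = opnorm M T"
  have "a \<ge> 0" "t \<ge> 0" using opnorm_nonneg Ab Tb by (auto simp: a_def t_def)
  define \<delta> where "\<delta> = min 1 (e / (t + a + 2))"
  have \<delta>: "\<delta> > 0" "\<delta> \<le> 1" "\<delta> \<le> e / (t + a + 2)"
    using \<open>e > 0\<close> \<open>a \<ge> 0\<close> \<open>t \<ge> 0\<close> by (auto simp: \<delta>_def)
  obtain k1 where k1: "good_kernel k1" "opnorm M (op_diff A (op_kernel M k1)) < \<delta>"
    using roe_approx[OF A \<delta>(1)] by auto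
  obtain k2 where k2: "good_kernel k2" "opnorm M (op_diff T (op_kernel M k2)) < \<delta>"
    using roe_approx[OF T \<delta>(1)] by auto
  obtain B1 s1 B2 s2 where b1: "band_kernel k1 B1 s1" and b2: "band_kernel k2 B2 s2"
    using k1(1) k2(1) by (meson good_kernel_imp_band_kernel)
  have "opnorm M (op_diff (A \<circ> T) (op_kernel M (kernel_comp M k1 k2)))
      \<le> opnorm M (op_diff A (op_kernel M k1)) * t + opnorm M (op_kernel M k1) * opnorm M (op_diff T (op_kernel M k2))"
    unfolding t_def by (rule opnorm_comp_diff_kernel_comp_le[OF Ab Tb k1(1) b1 k2(1) b2])
  also have "\<dots> \<le> \<delta> * t + (a + \<delta>) * \<delta>"
    using k1(2) k2(2) opnorm_kernel_le_approx[OF Ab k1(1)] \<open>t \<ge> 0\<close> \<open>a \<ge> 0\<close> \<delta>(1)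
      opnorm_nonneg[OF bounded_op_diff[OF Tb bounded_op_kernel_good[OF k2(1)]]]
    by (intro add_mono mult_mono) (auto simp: a_def)
  also have "\<dots> \<le> \<delta> * (t + a + 1)"
    using \<delta> by (simp add: algebra_simps mult_left_le)
  also have "\<dots> < \<delta> * (t + a + 2)"
    using \<delta>(1) by simp
  also have "\<dots> \<le> e"
    using \<delta>(3) \<open>a \<ge> 0\<close> \<open>t \<ge> 0\<close> by (simp add: le_divide_eq)
  finally show "\<exists>k. good_kernel k \<and> opnorm M (op_diff (A \<circ> T) (op_kernel M k)) < e"
    using good_kernel_comp[OF k1(1) k2(1)] by blast
qed

end

lemma mult_ind_comp_op_add: "mult_ind B \<circ> op_add S T = op_add (mult_ind B \<circ> S) (mult_ind B \<circ> T)"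
  by (simp add: fun_eq_iff mult_ind_def op_add_def algebra_simps)

lemma opnorm_mult_ind_comp_add_le:
  assumes "B \<in> sets M" "bounded_op M S" "bounded_op M T"
  shows "opnorm M (mult_ind B \<circ> op_add S T) \<le> opnorm M (mult_ind B \<circ> S) + opnorm M (mult_ind B \<circ> T)"
  unfolding mult_ind_comp_op_add using assms by (intro opnorm_add_le bounded_op_mult_ind_comp)

lemma opnorm_mult_ind_comp_scale_le:
  assumes "B \<in> sets M" "bounded_op M T"
  shows "opnorm M (mult_ind B \<circ> op_scale c T) \<le> cmod c * opnorm M (mult_ind B \<circ> T)"
proof -
  have "mult_ind B \<circ> op_scale c T = op_scale c (mult_ind B \<circ> T)"
    by (simp add: fun_eq_iff mult_ind_def op_scale_def algebra_simps)
  then show ?thesis using assms by (simp add: opnorm_scale_le bounded_op_mult_ind_comp)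
qed

lemma opnorm_mult_ind_comp_comp_le:
  assumes "B \<in> sets M" "bounded_op M T" "bounded_op M A"
  shows "opnorm M (mult_ind B \<circ> (T \<circ> A)) \<le> opnorm M (mult_ind B \<circ> T) * opnorm M A"
proof -
  have "mult_ind B \<circ> (T \<circ> A) = (mult_ind B \<circ> T) \<circ> A" by (simp add: o_assoc)
  then show ?thesis using assms by (simp add: opnorm_comp_le bounded_op_mult_ind_comp)
qed

lemma opnorm_mult_ind_comp_approx_le:
  assumes "B \<in> sets M" "bounded_op M T" "bounded_op M S"
  shows "opnorm M (mult_ind B \<circ> T) \<le> opnorm M (mult_ind B \<circ> S) + opnorm M (op_diff T S)"
proof -
  have "mult_ind B \<circ> T = op_add (mult_ind B \<circ> S) (mult_ind B \<circ> op_diff T S)"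
    by (simp add: fun_eq_iff mult_ind_def op_add_def op_diff_def algebra_simps)
  then have "opnorm M (mult_ind B \<circ> T) \<le> opnorm M (mult_ind B \<circ> S) + opnorm M (mult_ind B \<circ> op_diff T S)"
    using assms by (simp add: opnorm_add_le bounded_op_mult_ind_comp bounded_op_diff)
  also have "opnorm M (mult_ind B \<circ> op_diff T S) \<le> opnorm M (op_diff T S)"
    using assms by (intro opnorm_mult_ind_comp_le bounded_op_diff)
  finally show ?thesis by (simp add: comp_def)
qed

lemma mult_ind_op_kernel_local:
  assumes k: "band_kernel k B s" and local: "\<And>x y. x \<in> A1 \<Longrightarrow> dist x y \<le> s \<Longrightarrow> y \<in> A2"
  shows "mult_ind A1 (op_kernel M k g) = mult_ind A1 (op_kernel M k (mult_ind A2 g))"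
proof (rule ext)
  fix x
  show "mult_ind A1 (op_kernel M k g) x = mult_ind A1 (op_kernel M k (mult_ind A2 g)) x"
  proof (cases "x \<in> A1")
    case True
    have "k (x, y) * g y = k (x, y) * mult_ind A2 g y" for y
      using local[OF True, of y] band_kernelD(5)[OF k, of x y]
      by (cases "dist x y \<le> s") (auto simp: mult_ind_def)
    then have "(\<lambda>y. k (x, y) * g y) = (\<lambda>y. k (x, y) * mult_ind A2 g y)" by (rule ext)
    then show ?thesis by (simp add: mult_ind_def op_kernel_def)
  qed (simp add: mult_ind_def)
qed

context roe_space
begin

text \<open>Since \<open>K\<close> has propagation \<open>s\<close>, \<open>1\<^sub>A\<^sub>1 A T = 1\<^sub>A\<^sub>1 (A - K) T + 1\<^sub>A\<^sub>1 K 1\<^sub>A\<^sub>2 T\<close>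
  when \<open>A\<^sub>2\<close> contains the \<open>s\<close>-neighbourhood of \<open>A\<^sub>1\<close>.\<close>
lemma opnorm_mult_ind_comp_left_le:
  assumes A: "bounded_op M A" and T: "bounded_op M T" and k: "good_kernel k" "band_kernel k B s"
    and \<delta>: "opnorm M (op_diff A (op_kernel M k)) \<le> \<delta>"
    and A1: "A1 \<in> sets M" and A2: "A2 \<in> sets M"
    and local: "\<And>x y. x \<in> A1 \<Longrightarrow> dist x y \<le> s \<Longrightarrow> y \<in> A2"
  shows "opnorm M (mult_ind A1 \<circ> (A \<circ> T)) \<le> \<delta> * opnorm M T + (opnorm M A + \<delta>) * opnorm M (mult_ind A2 \<circ> T)"
proof -
  define K where "K = op_kernel M k"
  have K: "bounded_op M K" unfolding K_def by (rule bounded_op_kernel_good[OF k(1)])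
  have D: "bounded_op M (op_diff A K)" by (rule bounded_op_diff[OF A K])
  have "mult_ind A1 \<circ> (A \<circ> T) = op_add (mult_ind A1 \<circ> (op_diff A K \<circ> T)) (mult_ind A1 \<circ> (K \<circ> (mult_ind A2 \<circ> T)))"
  proof (intro ext)
    fix f x
    have "mult_ind A1 (K (T f)) x = mult_ind A1 (K (mult_ind A2 (T f))) x"
      unfolding K_def by (rule fun_cong[OF mult_ind_op_kernel_local[OF k(2) local]])
    then show "(mult_ind A1 \<circ> (A \<circ> T)) f x
        = op_add (mult_ind A1 \<circ> (op_diff A K \<circ> T)) (mult_ind A1 \<circ> (K \<circ> (mult_ind A2 \<circ> T))) f x"
      by (simp add: mult_ind_def op_add_def op_diff_def algebra_simps)
  qed
  then have "opnorm M (mult_ind A1 \<circ> (A \<circ> T))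
      \<le> opnorm M (mult_ind A1 \<circ> (op_diff A K \<circ> T)) + opnorm M (mult_ind A1 \<circ> (K \<circ> (mult_ind A2 \<circ> T)))"
    by (simp add: opnorm_add_le bounded_op_mult_ind_comp bounded_op_comp A1 A2 D K T)
  also have "\<dots> \<le> opnorm M (op_diff A K) * opnorm M T + opnorm M K * opnorm M (mult_ind A2 \<circ> T)"
    by (intro add_mono order_trans[OF opnorm_mult_ind_comp_le opnorm_comp_le]
        bounded_op_comp bounded_op_mult_ind_comp A2 D K T)
  also have "\<dots> \<le> \<delta> * opnorm M T + (opnorm M A + \<delta>) * opnorm M (mult_ind A2 \<circ> T)"
    using \<delta> opnorm_kernel_le_approx[OF A k(1)]
    by (intro add_mono mult_right_mono opnorm_nonneg T bounded_op_mult_ind_comp A2) (simp_all add: K_def)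
  finally show ?thesis .
qed

end

section \<open>Ideals of operators vanishing along filters of sets\<close>

text \<open>The common shape of both ideals: for \<open>\<G>\<^sub>\<xi>\<close> the sets are the balls \<open>B\<^sub>x(r)\<close> with
  \<open>x \<rightarrow> \<xi>\<close> (one filter for each \<open>r\<close>), for \<open>\<J>\<^sub>\<eta>\<close> the measurable subsets of members of \<open>\<eta>\<close>.\<close>
definition vanishing_ideal :: "'a::metric_space measure \<Rightarrow> 'a set filter set \<Rightarrow> 'a op set" where
  "vanishing_ideal M \<Phi> = {T \<in> roe M. \<forall>F\<in>\<Phi>. ((\<lambda>B. opnorm M (mult_ind B \<circ> T)) \<longlongrightarrow> 0) F}"

definition coarse_filters :: "'a::metric_space measure \<Rightarrow> 'a set filter set \<Rightarrow> bool" where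
  "coarse_filters M \<Phi> \<longleftrightarrow> (\<forall>F\<in>\<Phi>. eventually (\<lambda>B. B \<in> sets M) F) \<and>
     (\<forall>F\<in>\<Phi>. \<forall>s>0. \<exists>F'\<in>\<Phi>. \<forall>P. eventually P F' \<longrightarrow>
        eventually (\<lambda>B. \<exists>B'\<in>sets M. P B' \<and> (\<forall>x\<in>B. cball x s \<subseteq> B')) F)"

lemma tendsto_zero_iff_eventually_less:
  fixes g :: "'b \<Rightarrow> real"
  assumes "eventually (\<lambda>x. 0 \<le> g x) F"
  shows "(g \<longlongrightarrow> 0) F \<longleftrightarrow> (\<forall>e>0. eventually (\<lambda>x. g x < e) F)"
  unfolding order_tendsto_iff using assms by (auto elim: eventually_mono)

lemma mult_less_if_less_divide:
  fixes a v e :: real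
  assumes "a \<ge> 0" "v \<ge> 0" "v < e / (a + 1)"
  shows "a * v < e"
proof -
  have "(a + 1) * v < e" using assms by (simp add: pos_less_divide_eq mult.commute)
  moreover have "a * v \<le> (a + 1) * v" using assms by (simp add: mult_right_mono)
  ultimately show ?thesis by linarith
qed

lemma coarse_filtersD:
  assumes "coarse_filters M \<Phi>" "F \<in> \<Phi>"
  shows "eventually (\<lambda>B. B \<in> sets M) F"
    and "s > 0 \<Longrightarrow> \<exists>F'\<in>\<Phi>. \<forall>P. eventually P F' \<longrightarrow>
           eventually (\<lambda>B. \<exists>B'\<in>sets M. P B' \<and> (\<forall>x\<in>B. cball x s \<subseteq> B')) F"
  using assms unfolding coarse_filters_def by blast+

context roe_space
begin

lemma mem_vanishing_ideal_iff:
  assumes "\<forall>F\<in>\<Phi>. eventually (\<lambda>B. B \<in> sets M) F"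
  shows "T \<in> vanishing_ideal M \<Phi> \<longleftrightarrow>
    T \<in> roe M \<and> (\<forall>F\<in>\<Phi>. \<forall>e>0. eventually (\<lambda>B. opnorm M (mult_ind B \<circ> T) < e) F)"
proof -
  have "eventually (\<lambda>B. 0 \<le> opnorm M (mult_ind B \<circ> T)) F" if "T \<in> roe M" "F \<in> \<Phi>" for F
  proof -
    have "eventually (\<lambda>B. B \<in> sets M) F" using assms that(2) by blast
    then show ?thesis
      by (rule eventually_mono) (intro opnorm_nonneg bounded_op_mult_ind_comp roe_bounded_op that(1))
  qed
  then show ?thesis
    unfolding vanishing_ideal_def by (auto simp: tendsto_zero_iff_eventually_less)
qed

context
  fixes \<Phi> :: "'a set filter set"
  assumes \<Phi>: "coarse_filters M \<Phi>"
begin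

lemma eventually_in_sets: "\<forall>F\<in>\<Phi>. eventually (\<lambda>B. B \<in> sets M) F"
  using \<Phi> by (simp add: coarse_filters_def)

lemma vanishing_ideal_roe: "vanishing_ideal M \<Phi> \<subseteq> roe M"
  by (auto simp: vanishing_ideal_def)

lemma vanishing_idealD:
  assumes "T \<in> vanishing_ideal M \<Phi>" "F \<in> \<Phi>" "e > 0"
  shows "eventually (\<lambda>B. B \<in> sets M \<and> opnorm M (mult_ind B \<circ> T) < e) F"
  using assms coarse_filtersD(1)[OF \<Phi>]
  by (intro eventually_conj) (auto simp: mem_vanishing_ideal_iff[OF eventually_in_sets])

lemma vanishing_ideal_zero: "op_zero \<in> vanishing_ideal M \<Phi>"
proof -
  have "mult_ind B \<circ> op_zero = op_zero" for B :: "'a set"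
    by (simp add: fun_eq_iff mult_ind_def op_zero_def)
  then show ?thesis
    by (simp add: mem_vanishing_ideal_iff[OF eventually_in_sets] roe_zero opnorm_zero)
qed

lemma vanishing_ideal_add:
  assumes S: "S \<in> vanishing_ideal M \<Phi>" and T: "T \<in> vanishing_ideal M \<Phi>"
  shows "op_add S T \<in> vanishing_ideal M \<Phi>"
  unfolding mem_vanishing_ideal_iff[OF eventually_in_sets]
proof (intro conjI ballI allI impI)
  have Sr: "S \<in> roe M" and Tr: "T \<in> roe M" using S T by (auto simp: mem_vanishing_ideal_iff[OF eventually_in_sets])
  then show "op_add S T \<in> roe M" by (rule roe_add)
  fix F e assume "F \<in> \<Phi>" "(e::real) > 0"
  then have "eventually (\<lambda>B. (B \<in> sets M \<and> opnorm M (mult_ind B \<circ> S) < e / 2) \<and>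
      (B \<in> sets M \<and> opnorm M (mult_ind B \<circ> T) < e / 2)) F"
    by (intro eventually_conj vanishing_idealD S T) simp_all
  then show "eventually (\<lambda>B. opnorm M (mult_ind B \<circ> op_add S T) < e) F"
    by (rule eventually_mono)
       (use opnorm_mult_ind_comp_add_le roe_bounded_op[OF Sr] roe_bounded_op[OF Tr] in fastforce)
qed

lemma vanishing_ideal_scale:
  assumes T: "T \<in> vanishing_ideal M \<Phi>"
  shows "op_scale c T \<in> vanishing_ideal M \<Phi>"
  unfolding mem_vanishing_ideal_iff[OF eventually_in_sets]
proof (intro conjI ballI allI impI)
  have Tr: "T \<in> roe M" using T by (simp add: mem_vanishing_ideal_iff[OF eventually_in_sets])
  then show "op_scale c T \<in> roe M" by (rule roe_scale)
  fix F e assume "F \<in> \<Phi>" "(e::real) > 0"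
  then have "eventually (\<lambda>B. B \<in> sets M \<and> opnorm M (mult_ind B \<circ> T) < e / (cmod c + 1)) F"
    by (intro vanishing_idealD T) (simp_all add: add_nonneg_pos)
  then show "eventually (\<lambda>B. opnorm M (mult_ind B \<circ> op_scale c T) < e) F"
  proof (rule eventually_mono, elim conjE)
    fix B assume B: "B \<in> sets M" and small: "opnorm M (mult_ind B \<circ> T) < e / (cmod c + 1)"
    have "opnorm M (mult_ind B \<circ> op_scale c T) \<le> cmod c * opnorm M (mult_ind B \<circ> T)"
      by (rule opnorm_mult_ind_comp_scale_le[OF B roe_bounded_op[OF Tr]])
    also have "\<dots> < e"
      using small by (intro mult_less_if_less_divide opnorm_nonneg bounded_op_mult_ind_comp B
          roe_bounded_op[OF Tr]) simp_all
    finally show "opnorm M (mult_ind B \<circ> op_scale c T) < e" .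
  qed
qed

lemma vanishing_ideal_comp_right:
  assumes T: "T \<in> vanishing_ideal M \<Phi>" and A: "A \<in> roe M"
  shows "T \<circ> A \<in> vanishing_ideal M \<Phi>"
  unfolding mem_vanishing_ideal_iff[OF eventually_in_sets]
proof (intro conjI ballI allI impI)
  have Tr: "T \<in> roe M" using T by (simp add: mem_vanishing_ideal_iff[OF eventually_in_sets])
  then show "T \<circ> A \<in> roe M" using A by (rule roe_comp)
  fix F e assume "F \<in> \<Phi>" "(e::real) > 0"
  then have "eventually (\<lambda>B. B \<in> sets M \<and> opnorm M (mult_ind B \<circ> T) < e / (opnorm M A + 1)) F"
    using opnorm_nonneg[OF roe_bounded_op[OF A]]
    by (intro vanishing_idealD T) (simp_all add: add_nonneg_pos)
  then show "eventually (\<lambda>B. opnorm M (mult_ind B \<circ> (T \<circ> A)) < e) F"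
  proof (rule eventually_mono, elim conjE)
    fix B assume B: "B \<in> sets M" and small: "opnorm M (mult_ind B \<circ> T) < e / (opnorm M A + 1)"
    have "opnorm M (mult_ind B \<circ> (T \<circ> A)) \<le> opnorm M A * opnorm M (mult_ind B \<circ> T)"
      using opnorm_mult_ind_comp_comp_le[OF B roe_bounded_op[OF Tr] roe_bounded_op[OF A]]
      by (simp add: mult.commute)
    also have "\<dots> < e"
      using small by (intro mult_less_if_less_divide opnorm_nonneg bounded_op_mult_ind_comp B
          roe_bounded_op Tr A)
    finally show "opnorm M (mult_ind B \<circ> (T \<circ> A)) < e" .
  qed
qed

lemma vanishing_ideal_closed:
  assumes T: "T \<in> roe M" and approx: "\<forall>e>0. \<exists>S\<in>vanishing_ideal M \<Phi>. opnorm M (op_diff T S) < e"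
  shows "T \<in> vanishing_ideal M \<Phi>"
  unfolding mem_vanishing_ideal_iff[OF eventually_in_sets]
proof (intro conjI ballI allI impI T)
  fix F e assume "F \<in> \<Phi>" "(e::real) > 0"
  then obtain S where S: "S \<in> vanishing_ideal M \<Phi>" "opnorm M (op_diff T S) < e / 2"
    using approx by (meson half_gt_zero)
  then have Sr: "S \<in> roe M" by (simp add: mem_vanishing_ideal_iff[OF eventually_in_sets])
  have "eventually (\<lambda>B. B \<in> sets M \<and> opnorm M (mult_ind B \<circ> S) < e / 2) F"
    using \<open>F \<in> \<Phi>\<close> \<open>e > 0\<close> by (intro vanishing_idealD S) simp_all
  then show "eventually (\<lambda>B. opnorm M (mult_ind B \<circ> T) < e) F"
    by (rule eventually_mono)
       (use S(2) opnorm_mult_ind_comp_approx_le roe_bounded_op[OF T] roe_bounded_op[OF Sr] in fastforce)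
qed

lemma vanishing_ideal_comp_left:
  assumes T: "T \<in> vanishing_ideal M \<Phi>" and A: "A \<in> roe M"
  shows "A \<circ> T \<in> vanishing_ideal M \<Phi>"
  unfolding mem_vanishing_ideal_iff[OF eventually_in_sets]
proof (intro conjI ballI allI impI)
  have Tr: "T \<in> roe M" using T by (simp add: mem_vanishing_ideal_iff[OF eventually_in_sets])
  with A show "A \<circ> T \<in> roe M" by (rule roe_comp)
  have Tb: "bounded_op M T" and Ab: "bounded_op M A" using Tr A by (auto intro: roe_bounded_op)
  fix F e assume F: "F \<in> \<Phi>" and "(e::real) > 0"
  define t a where "t = opnorm M T" and "a = opnorm M A"
  have "t \<ge> 0" "a \<ge> 0" unfolding t_def a_def using Tb Ab by (auto intro: opnorm_nonneg)
  define \<delta> where "\<delta> = e / 4 / (t + 1)"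
  have "\<delta> > 0" "\<delta> < e / 2 / (t + 1)"
    using \<open>e > 0\<close> \<open>t \<ge> 0\<close> unfolding \<delta>_def
    by (simp, intro divide_strict_right_mono) simp_all
  obtain k where k: "good_kernel k" "opnorm M (op_diff A (op_kernel M k)) < \<delta>"
    using roe_approx[OF A \<open>\<delta> > 0\<close>] by auto
  obtain C s where band: "band_kernel k C s" using good_kernel_imp_band_kernel[OF k(1)] by blast
  obtain F' where "F' \<in> \<Phi>" and thicken: "\<And>P. eventually P F' \<Longrightarrow>
      eventually (\<lambda>B. \<exists>B'\<in>sets M. P B' \<and> (\<forall>x\<in>B. cball x s \<subseteq> B')) F"
    using coarse_filtersD(2)[OF \<Phi> F band_kernelD(3)[OF band]] by blast
  have "eventually (\<lambda>B'. B' \<in> sets M \<and> opnorm M (mult_ind B' \<circ> T) < e / 2 / (a + \<delta> + 1)) F'"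
    using \<open>F' \<in> \<Phi>\<close> \<open>e > 0\<close> \<open>a \<ge> 0\<close> \<open>\<delta> > 0\<close> by (intro vanishing_idealD T) simp_all
  from thicken[OF this] coarse_filtersD(1)[OF \<Phi> F]
  show "eventually (\<lambda>B. opnorm M (mult_ind B \<circ> (A \<circ> T)) < e) F"
  proof eventually_elim
    case (elim B)
    then obtain B' where B': "B' \<in> sets M" "opnorm M (mult_ind B' \<circ> T) < e / 2 / (a + \<delta> + 1)"
      and nbhd: "\<forall>x\<in>B. cball x s \<subseteq> B'" by blast
    have local: "\<And>x y. x \<in> B \<Longrightarrow> dist x y \<le> s \<Longrightarrow> y \<in> B'"
      using nbhd by (metis mem_cball subsetD)
    have "opnorm M (mult_ind B \<circ> (A \<circ> T)) \<le> t * \<delta> + (a + \<delta>) * opnorm M (mult_ind B' \<circ> T)"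
      unfolding t_def a_def using k(2)
      by (simp add: mult.commute opnorm_mult_ind_comp_left_le[OF Ab Tb k(1) band _ elim(2) B'(1) local])
    also have "\<dots> < e / 2 + e / 2"
      using \<open>t \<ge> 0\<close> \<open>a \<ge> 0\<close> \<open>\<delta> > 0\<close> \<open>\<delta> < e / 2 / (t + 1)\<close> B'
      by (intro add_strict_mono mult_less_if_less_divide opnorm_nonneg bounded_op_mult_ind_comp Tb) simp_all
    finally show ?case by simp
  qed
qed

theorem closed_ideal_vanishing_ideal: "closed_ideal M (vanishing_ideal M \<Phi>)"
  unfolding closed_ideal_def
  by (simp add: vanishing_ideal_roe vanishing_ideal_zero vanishing_ideal_add vanishing_ideal_scale
      vanishing_ideal_comp_left vanishing_ideal_comp_right vanishing_ideal_closed)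

end

end

section \<open>The ideals \<open>\<G>\<^sub>\<xi>\<close> and \<open>\<J>\<^sub>\<eta>\<close>\<close>

lemma cball_subset_rint: "x \<in> rint F r \<Longrightarrow> cball x r \<subseteq> F"
  unfolding rint_def by force

lemma open_rint: "open (rint F r)"
  unfolding open_dist
proof (intro ballI)
  fix x assume "x \<in> rint F r"
  then obtain \<delta> where \<delta>: "\<delta> > r" "\<And>y. y \<notin> F \<Longrightarrow> \<delta> \<le> dist x y" by (auto simp: rint_def)
  show "\<exists>e>0. \<forall>y. dist y x < e \<longrightarrow> y \<in> rint F r"
  proof (intro exI[of _ "(\<delta> - r) / 2"] conjI allI impI)
    fix y assume y: "dist y x < (\<delta> - r) / 2"
    have "\<delta> - (\<delta> - r) / 2 \<le> dist y z" if "z \<notin> F" for z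
      using \<delta>(2)[OF that] dist_triangle[of x z y] y by (simp add: dist_commute field_simps)
    moreover have "\<delta> - (\<delta> - r) / 2 > r" using \<delta>(1) by (simp add: field_simps)
    ultimately show "y \<in> rint F r" unfolding rint_def by blast
  qed (use \<delta>(1) in simp)
qed

lemma INF_eq_0_iff:
  fixes f :: "'b \<Rightarrow> real"
  assumes "X \<noteq> {}" "\<And>x. x \<in> X \<Longrightarrow> 0 \<le> f x"
  shows "(INF x\<in>X. f x) = 0 \<longleftrightarrow> (\<forall>e>0. \<exists>x\<in>X. f x < e)"
proof -
  have bdd: "bdd_below (f ` X)" using assms(2) by (intro bdd_belowI2[of _ 0]) auto
  have "0 \<le> (INF x\<in>X. f x)" using assms by (intro cINF_greatest) auto
  moreover have "(INF x\<in>X. f x) \<le> 0 \<longleftrightarrow> (\<forall>e>0. \<exists>x\<in>X. f x < e)"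
  proof
    assume "(INF x\<in>X. f x) \<le> 0"
    then show "\<forall>e>0. \<exists>x\<in>X. f x < e"
      using cINF_less_iff[OF assms(1) bdd] by (meson le_less_trans)
  next
    assume small: "\<forall>e>0. \<exists>x\<in>X. f x < e"
    show "(INF x\<in>X. f x) \<le> 0"
    proof (rule dense_ge)
      fix e :: real assume "0 < e"
      with small obtain x where "x \<in> X" "f x < e" by blast
      then show "(INF x\<in>X. f x) \<le> e" using cINF_lower[OF bdd, of x] by simp
    qed
  qed
  ultimately show ?thesis by (simp add: order.eq_iff)
qed

text \<open>Since \<open>\<parallel>1\<^sub>B T\<parallel>\<close> is monotone in \<open>B\<close>, the infimum defining \<open>\<J>\<^sub>\<eta>\<close> is a limit along
  this filter.\<close>
definition measurable_subsets_filter :: "'a measure \<Rightarrow> 'a filter \<Rightarrow> 'a set filter" where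
  "measurable_subsets_filter M \<eta> =
     (INF F\<in>{F. F \<in> sets M \<and> eventually (\<lambda>x. x \<in> F) \<eta>}. principal {B \<in> sets M. B \<subseteq> F})"

context roe_space
begin

lemma G_ideal_eq_vanishing_ideal:
  "G_ideal M \<xi> = vanishing_ideal M ((\<lambda>r. filtermap (\<lambda>x. cball x r) \<xi>) ` {0<..})"
  by (auto simp: G_ideal_def vanishing_ideal_def filterlim_filtermap)

lemma coarse_filters_cball: "coarse_filters M ((\<lambda>r. filtermap (\<lambda>x. cball x r) \<xi>) ` {0<..})"
  unfolding coarse_filters_def
proof (intro conjI ballI allI impI)
  fix F assume "F \<in> (\<lambda>r. filtermap (\<lambda>x. cball x r) \<xi>) ` {0<..}"
  then obtain r where r: "r > 0" "F = filtermap (\<lambda>x. cball x r) \<xi>" by auto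
  show "eventually (\<lambda>B. B \<in> sets M) F" by (simp add: r eventually_filtermap)
  fix s :: real assume "s > 0"
  have nbhd: "cball y s \<subseteq> cball x (r + s)" if "y \<in> cball x r" for x y
  proof
    fix z assume "z \<in> cball y s"
    then show "z \<in> cball x (r + s)" using that dist_triangle[of x z y] by auto
  qed
  then have "eventually P (filtermap (\<lambda>x. cball x (r + s)) \<xi>) \<Longrightarrow>
      eventually (\<lambda>B. \<exists>B'\<in>sets M. P B' \<and> (\<forall>x\<in>B. cball x s \<subseteq> B')) F" for P
    unfolding r eventually_filtermap by (elim eventually_mono) (use nbhd cball_in_sets in blast)
  moreover have "filtermap (\<lambda>x. cball x (r + s)) \<xi> \<in> (\<lambda>r. filtermap (\<lambda>x. cball x r) \<xi>) ` {0<..}"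
    using r \<open>s > 0\<close> by auto
  ultimately show "\<exists>F'\<in>(\<lambda>r. filtermap (\<lambda>x. cball x r) \<xi>) ` {0<..}. \<forall>P. eventually P F' \<longrightarrow>
      eventually (\<lambda>B. \<exists>B'\<in>sets M. P B' \<and> (\<forall>x\<in>B. cball x s \<subseteq> B')) F"
    by blast
qed

theorem closed_ideal_G_ideal: "closed_ideal M (G_ideal M \<xi>)"
  unfolding G_ideal_eq_vanishing_ideal by (rule closed_ideal_vanishing_ideal[OF coarse_filters_cball])

lemma eventually_measurable_subsets_filter:
  "eventually P (measurable_subsets_filter M \<eta>) \<longleftrightarrow>
    (\<exists>F\<in>sets M. eventually (\<lambda>x. x \<in> F) \<eta> \<and> (\<forall>B\<in>sets M. B \<subseteq> F \<longrightarrow> P B))"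
  unfolding measurable_subsets_filter_def
proof (subst eventually_INF_base)
  show "{F. F \<in> sets M \<and> eventually (\<lambda>x. x \<in> F) \<eta>} \<noteq> {}"
    using sets.top[of M] by auto
  show "\<exists>H\<in>{F. F \<in> sets M \<and> eventually (\<lambda>x. x \<in> F) \<eta>}.
      principal {B \<in> sets M. B \<subseteq> H} \<le> inf (principal {B \<in> sets M. B \<subseteq> F}) (principal {B \<in> sets M. B \<subseteq> G})"
    if "F \<in> {F. F \<in> sets M \<and> eventually (\<lambda>x. x \<in> F) \<eta>}" "G \<in> {F. F \<in> sets M \<and> eventually (\<lambda>x. x \<in> F) \<eta>}"
    for F G
    using that by (intro bexI[of _ "F \<inter> G"]) (auto simp: eventually_conj_iff)
qed (auto simp: eventually_principal)

lemma mem_J_ideal_iff: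
  "T \<in> J_ideal M \<eta> \<longleftrightarrow> T \<in> roe M \<and>
    (\<forall>e>0. \<exists>F\<in>sets M. eventually (\<lambda>x. x \<in> F) \<eta> \<and> opnorm M (mult_ind F \<circ> T) < e)"
proof -
  have "(INF F\<in>{F. F \<in> sets M \<and> eventually (\<lambda>x. x \<in> F) \<eta>}. opnorm M (mult_ind F \<circ> T)) = 0 \<longleftrightarrow>
      (\<forall>e>0. \<exists>F\<in>sets M. eventually (\<lambda>x. x \<in> F) \<eta> \<and> opnorm M (mult_ind F \<circ> T) < e)"
    if "T \<in> roe M"
    using sets.top[of M] that
    by (subst INF_eq_0_iff)
       (auto intro!: opnorm_nonneg bounded_op_mult_ind_comp roe_bounded_op[OF that])
  then show ?thesis unfolding J_ideal_def by blast
qed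

lemma J_ideal_eq_vanishing_ideal: "J_ideal M \<eta> = vanishing_ideal M {measurable_subsets_filter M \<eta>}"
proof -
  have sets: "\<forall>F\<in>{measurable_subsets_filter M \<eta>}. eventually (\<lambda>B. B \<in> sets M) F"
    using sets.top[of M] by (auto simp: eventually_measurable_subsets_filter intro!: bexI[of _ UNIV])
  have "(\<exists>F\<in>sets M. eventually (\<lambda>x. x \<in> F) \<eta> \<and> opnorm M (mult_ind F \<circ> T) < e) \<longleftrightarrow>
      eventually (\<lambda>B. opnorm M (mult_ind B \<circ> T) < e) (measurable_subsets_filter M \<eta>)"
    if "T \<in> roe M" for T e
    unfolding eventually_measurable_subsets_filter
    using opnorm_mult_ind_comp_mono[OF roe_bounded_op[OF that]] by (meson le_less_trans order_refl)
  then show ?thesis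
    by (auto simp: mem_J_ideal_iff mem_vanishing_ideal_iff[OF sets])
qed

lemma coarse_filters_measurable_subsets_filter:
  assumes "coarse \<eta>"
  shows "coarse_filters M {measurable_subsets_filter M \<eta>}"
  unfolding coarse_filters_def
proof (intro conjI ballI allI impI)
  fix F assume F: "F \<in> {measurable_subsets_filter M \<eta>}"
  then show "eventually (\<lambda>B. B \<in> sets M) F"
    using sets.top[of M] by (auto simp: eventually_measurable_subsets_filter intro!: bexI[of _ UNIV])
  fix s :: real assume "s > 0"
  have "eventually (\<lambda>B. \<exists>B'\<in>sets M. P B' \<and> (\<forall>x\<in>B. cball x s \<subseteq> B')) F"
    if P: "eventually P F" for P
  proof -
    have F_eq: "F = measurable_subsets_filter M \<eta>" using F by simp
    obtain F0 where F0: "F0 \<in> sets M" "eventually (\<lambda>x. x \<in> F0) \<eta>" "\<And>B. B \<in> sets M \<Longrightarrow> B \<subseteq> F0 \<Longrightarrow> P B"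
      using P unfolding F_eq eventually_measurable_subsets_filter by auto
    have "P F0" using F0(1) by (intro F0(3)) auto
    have "rint F0 s \<in> sets M" by (rule open_in_sets[OF open_rint])
    moreover have "eventually (\<lambda>x. x \<in> rint F0 s) \<eta>"
      using assms F0(2) \<open>s > 0\<close> by (simp add: coarse_def)
    moreover have "\<forall>x\<in>B. cball x s \<subseteq> F0" if "B \<subseteq> rint F0 s" for B
      using that cball_subset_rint by blast
    ultimately show ?thesis
      unfolding F_eq eventually_measurable_subsets_filter using F0(1) \<open>P F0\<close> by blast
  qed
  then show "\<exists>F'\<in>{measurable_subsets_filter M \<eta>}. \<forall>P. eventually P F' \<longrightarrow>
      eventually (\<lambda>B. \<exists>B'\<in>sets M. P B' \<and> (\<forall>x\<in>B. cball x s \<subseteq> B')) F"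
    using F by blast
qed

theorem closed_ideal_J_ideal: "coarse \<eta> \<Longrightarrow> closed_ideal M (J_ideal M \<eta>)"
  unfolding J_ideal_eq_vanishing_ideal
  by (rule closed_ideal_vanishing_ideal[OF coarse_filters_measurable_subsets_filter])

lemma J_ideal_co_subset_G_ideal: "J_ideal M (co \<xi>) \<subseteq> G_ideal M \<xi>"
proof
  fix T assume T: "T \<in> J_ideal M (co \<xi>)"
  then have Tb: "bounded_op M T" by (simp add: mem_J_ideal_iff roe_bounded_op)
  have "eventually (\<lambda>x. opnorm M (mult_ind (cball x r) \<circ> T) < e) \<xi>" if "r > 0" "e > 0" for r e
  proof -
    obtain F where F: "F \<in> sets M" "eventually (\<lambda>x. x \<in> F) (co \<xi>)" "opnorm M (mult_ind F \<circ> T) < e"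
      using T \<open>e > 0\<close> by (auto simp: mem_J_ideal_iff)
    have "eventually (\<lambda>x. x \<in> rint F r) \<xi>" using F(2) \<open>r > 0\<close> by (simp add: eventually_co)
    then show ?thesis
      by (rule eventually_mono)
         (use F opnorm_mult_ind_comp_mono[OF Tb F(1) cball_subset_rint] in fastforce)
  qed
  moreover have "\<forall>F\<in>(\<lambda>r. filtermap (\<lambda>x. cball x r) \<xi>) ` {0<..}. eventually (\<lambda>B. B \<in> sets M) F"
    by (auto simp: eventually_filtermap)
  ultimately show "T \<in> G_ideal M \<xi>"
    using T by (auto simp: G_ideal_eq_vanishing_ideal mem_vanishing_ideal_iff eventually_filtermap mem_J_ideal_iff)
qed

lemma J_ideal_subset_J_ideal_co:
  assumes "coarse \<xi>"
  shows "J_ideal M \<xi> \<subseteq> J_ideal M (co \<xi>)"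
proof -
  have "eventually (\<lambda>x. x \<in> F) \<xi> \<Longrightarrow> eventually (\<lambda>x. x \<in> F) (co \<xi>)" for F
    using assms by (simp add: coarse_def eventually_co)
  then show ?thesis by (fastforce simp: mem_J_ideal_iff)
qed

end

theorem lemma5p2:
  fixes M :: "'a::metric_space measure" and \<xi> :: "'a filter"
  assumes sets_M: "sets M = sets borel"
    and noncompact: "\<not> compact (UNIV :: 'a set)"
    and proper: "\<forall>(x::'a) r. compact (cball x r)"
    and radon: "\<forall>K. compact K \<longrightarrow> emeasure M K < \<infinity>"
    and support: "\<forall>U. open U \<and> U \<noteq> {} \<longrightarrow> emeasure M U > 0"
    and balls_pos: "\<forall>x r. r > 0 \<longrightarrow> emeasure M (cball x r) > 0"
    and balls_bdd: "\<forall>r>0. \<exists>C::real. \<forall>x. emeasure M (cball x r) \<le> ennreal C"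
    and filt: "\<xi> \<noteq> bot"
  shows "closed_ideal M (G_ideal M \<xi>) \<and> J_ideal M (co \<xi>) \<subseteq> G_ideal M \<xi> \<and>
         (coarse \<xi> \<longrightarrow> closed_ideal M (J_ideal M \<xi>) \<and> J_ideal M \<xi> \<subseteq> G_ideal M \<xi>)"
proof -
  interpret roe_space M
    using sets_M proper balls_bdd by unfold_locales auto
  show ?thesis
    using closed_ideal_G_ideal[of \<xi>] J_ideal_co_subset_G_ideal[of \<xi>]
      closed_ideal_J_ideal[of \<xi>] J_ideal_subset_J_ideal_co[of \<xi>]
    by blast
qed

end
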